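(* Let $\omega\in\mathbb{R}^2$ have incommensurable entries, let $1/2<s_2\le1$, $s_1>\frac{3s_2}{2s_2-1}$, and $u_0\in H^{s_1,s_2}_\omega$ real-valued. For $n\in\mathbb{N}$ let $u_n$ be the global smooth solution of the regularized equation $u_t=-P_nH\partial_x^2u+P_n\partial_x(P_nu\,P_nu)$ with initial data $u_n(0)=P_{\delta(n)^{1/s_1},\delta(n)^{1/s_2}}u_0$, where $\delta(n)\le n$ is an increasing function of $n$. There exists a time $T=T(\|u_0\|_{H^{s_1,s_2}_\omega})>0$ such that $$\|u_n\|_{L^\infty([0,T],H^{s_1,s_2}_\omega)}\le2\|u_0\|_{H^{s_1,s_2}_\omega}$$ uniformly in $n$. Further, $T$ can be taken uniformly for initial data from a compact subset of $H^{s_1,s_2}_\omega$.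
   Context: $\mathbb{T}^2=\mathbb{R}^2/\mathbb{Z}^2$ with Fourier coefficients $\hat u(k)$, $k\in\mathbb{Z}^2$; $\omega^\perp=(\omega_2,-\omega_1)$. Multipliers: $\partial_x$ (symbol $2\pi i\,\omega\cdot k$), $\langle\partial_x\rangle^s$ (symbol $\langle\omega\cdot k\rangle^s$), $\langle\partial_y\rangle^s$ (symbol $\langle\omega^\perp\cdot k\rangle^s$), $\langle a\rangle=(1+|a|^2)^{1/2}$; $H=-i(P_+-P_-)$, $P_\pm$ with symbol $1_{\{\pm\omega\cdot k>0\}}$. For $q,r>0$, $P_{q,r}$ is the Fourier projection onto modes $k$ with $|\omega\cdot k|\le q$ and $|\omega^\perp\cdot k|\le r$, and $P_n=P_{n,n}$. $H^{s_1,s_2}_\omega$ is the closure of $C^\infty(\mathbb{T}^2)$ under $\|\langle\partial_x\rangle^{s_1}u\|_{L^2}+\|\langle\partial_y\rangle^{s_2}u\|_{L^2}$. *)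

theory Defs
  imports "HOL-Analysis.Analysis"
begin

text \<open>Functions on the torus are represented by their Fourier coefficients
  u k, k in Z^2, with u(x) = sum_k u k * exp(2 pi i k.x).\<close>

type_synonym coeffs = "int \<times> int \<Rightarrow> complex"

definition incommensurable :: "real \<times> real \<Rightarrow> bool" where
  "incommensurable \<omega> \<longleftrightarrow>
     (\<forall>a b :: int. real_of_int a * fst \<omega> + real_of_int b * snd \<omega> = 0 \<longrightarrow> a = 0 \<and> b = 0)"

text \<open>omega . k and omega-perp . k, with omega-perp = (omega2, -omega1).\<close>
definition wdot :: "real \<times> real \<Rightarrow> int \<times> int \<Rightarrow> real" where
  "wdot \<omega> k = fst \<omega> * real_of_int (fst k) + snd \<omega> * real_of_int (snd k)"

definition wpdot :: "real \<times> real \<Rightarrow> int \<times> int \<Rightarrow> real" where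
  "wpdot \<omega> k = snd \<omega> * real_of_int (fst k) - fst \<omega> * real_of_int (snd k)"

definition jbr :: "real \<Rightarrow> real" where
  "jbr a = sqrt (1 + a\<^sup>2)"

definition fmult :: "(int \<times> int \<Rightarrow> complex) \<Rightarrow> coeffs \<Rightarrow> coeffs" where
  "fmult m u = (\<lambda>k. m k * u k)"

definition dx_sym :: "real \<times> real \<Rightarrow> int \<times> int \<Rightarrow> complex" where
  "dx_sym \<omega> k = 2 * complex_of_real pi * \<i> * complex_of_real (wdot \<omega> k)"

definition hilbert_sym :: "real \<times> real \<Rightarrow> int \<times> int \<Rightarrow> complex" where
  "hilbert_sym \<omega> k = - \<i> * ((if wdot \<omega> k > 0 then 1 else 0) - (if wdot \<omega> k < 0 then 1 else 0))"

definition Pqr_sym :: "real \<times> real \<Rightarrow> real \<Rightarrow> real \<Rightarrow> int \<times> int \<Rightarrow> complex" where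
  "Pqr_sym \<omega> q r k = (if \<bar>wdot \<omega> k\<bar> \<le> q \<and> \<bar>wpdot \<omega> k\<bar> \<le> r then 1 else 0)"

definition Pqr :: "real \<times> real \<Rightarrow> real \<Rightarrow> real \<Rightarrow> coeffs \<Rightarrow> coeffs" where
  "Pqr \<omega> q r = fmult (Pqr_sym \<omega> q r)"

definition Pn :: "real \<times> real \<Rightarrow> nat \<Rightarrow> coeffs \<Rightarrow> coeffs" where
  "Pn \<omega> n = Pqr \<omega> (real n) (real n)"

definition Dx :: "real \<times> real \<Rightarrow> coeffs \<Rightarrow> coeffs" where
  "Dx \<omega> = fmult (dx_sym \<omega>)"

definition Hilb :: "real \<times> real \<Rightarrow> coeffs \<Rightarrow> coeffs" where
  "Hilb \<omega> = fmult (hilbert_sym \<omega>)"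

text \<open>Fourier coefficients of the pointwise product of two functions.\<close>
definition conv :: "coeffs \<Rightarrow> coeffs \<Rightarrow> coeffs" where
  "conv f g = (\<lambda>k. \<Sum>\<^sub>\<infinity>j. f j * g (fst k - fst j, snd k - snd j))"

definition reg_rhs :: "real \<times> real \<Rightarrow> nat \<Rightarrow> coeffs \<Rightarrow> coeffs" where
  "reg_rhs \<omega> n u = (\<lambda>k. - Pn \<omega> n (Hilb \<omega> (Dx \<omega> (Dx \<omega> u))) k
                        + Pn \<omega> n (Dx \<omega> (conv (Pn \<omega> n u) (Pn \<omega> n u))) k)"

definition is_reg_solution :: "real \<times> real \<Rightarrow> nat \<Rightarrow> coeffs \<Rightarrow> (real \<Rightarrow> coeffs) \<Rightarrow> bool" where
  "is_reg_solution \<omega> n v0 u \<longleftrightarrow>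
     u 0 = v0 \<and>
     (\<forall>t\<ge>0. \<forall>k. ((\<lambda>\<tau>. u \<tau> k) has_vector_derivative reg_rhs \<omega> n (u t) k) (at t within {0..}))"

text \<open>Real-valuedness in terms of Fourier coefficients.\<close>
definition realvalued :: "coeffs \<Rightarrow> bool" where
  "realvalued u \<longleftrightarrow> (\<forall>k. u (- fst k, - snd k) = cnj (u k))"

text \<open>The anisotropic space H^{s1,s2}_omega (via Parseval) and its norm
  ||<dx>^s1 u||_L2 + ||<dy>^s2 u||_L2.\<close>
definition Hspace :: "real \<times> real \<Rightarrow> real \<Rightarrow> real \<Rightarrow> coeffs set" where
  "Hspace \<omega> s1 s2 = {u.
     (\<lambda>k. jbr (wdot \<omega> k) powr (2 * s1) * (cmod (u k))\<^sup>2) summable_on UNIV \<and>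
     (\<lambda>k. jbr (wpdot \<omega> k) powr (2 * s2) * (cmod (u k))\<^sup>2) summable_on UNIV}"

definition Hnorm :: "real \<times> real \<Rightarrow> real \<Rightarrow> real \<Rightarrow> coeffs \<Rightarrow> real" where
  "Hnorm \<omega> s1 s2 u =
     sqrt (\<Sum>\<^sub>\<infinity>k. jbr (wdot \<omega> k) powr (2 * s1) * (cmod (u k))\<^sup>2)
   + sqrt (\<Sum>\<^sub>\<infinity>k. jbr (wpdot \<omega> k) powr (2 * s2) * (cmod (u k))\<^sup>2)"

text \<open>Compactness of K in the normed space H^{s1,s2}_omega (sequential compactness,
  equivalent to compactness in a metric space).\<close>
definition Hcompact :: "real \<times> real \<Rightarrow> real \<Rightarrow> real \<Rightarrow> coeffs set \<Rightarrow> bool" where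
  "Hcompact \<omega> s1 s2 K \<longleftrightarrow> K \<subseteq> Hspace \<omega> s1 s2 \<and>
     (\<forall>x :: nat \<Rightarrow> coeffs. (\<forall>i. x i \<in> K) \<longrightarrow>
        (\<exists>r l. strict_mono r \<and> l \<in> K \<and> (\<lambda>i. Hnorm \<omega> s1 s2 (x (r i) - l)) \<longlonglongrightarrow> 0))"

definition admissible_delta :: "(nat \<Rightarrow> real) \<Rightarrow> bool" where
  "admissible_delta \<delta> \<longleftrightarrow> (\<forall>n\<ge>1. 0 < \<delta> n \<and> \<delta> n \<le> real n) \<and> mono_on {1..} \<delta>"

definition reg_family :: "real \<times> real \<Rightarrow> real \<Rightarrow> real \<Rightarrow> (nat \<Rightarrow> real) \<Rightarrow> coeffs
     \<Rightarrow> (nat \<Rightarrow> real \<Rightarrow> coeffs) \<Rightarrow> bool" where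
  "reg_family \<omega> s1 s2 \<delta> u0 u \<longleftrightarrow>
     (\<forall>n\<ge>1. is_reg_solution \<omega> n (Pqr \<omega> (\<delta> n powr (1 / s1)) (\<delta> n powr (1 / s2)) u0) (u n))"

end

theory Submission
  imports Defs
begin

text \<open>
  Only the modes in the box \<open>\<bar>\<omega>\<cdot>k\<bar>, \<bar>\<omega>\<^sup>\<perp>\<cdot>k\<bar> \<le> n\<close> move, and there are finitely many of them
  since \<open>\<omega> \<noteq> 0\<close>; all other Fourier coefficients keep their initial values. The solution stays
  real-valued, by Gronwall's inequality for the defect \<open>u(k) - conj (u(-k))\<close>.
  For the energy \<open>Q = \<Sum>\<^sub>k (\<langle>\<omega>\<cdot>k\<rangle>\<^sup>2\<^sup>s\<^sup>1 + \<langle>\<omega>\<^sup>\<perp>\<cdot>k\<rangle>\<^sup>2\<^sup>s\<^sup>2) \<bar>u(k)\<bar>\<^sup>2\<close> the dispersive term drops out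
  because its symbol is imaginary. In the nonlinear term, symmetrising over the pairs \<open>(a, b)\<close> with
  \<open>a + b = k\<close> and using reality cancels the derivative falling on the highest frequency; the
  commutators left over are bounded by \<open>\<parallel>\<partial>\<^sub>x u\<parallel>\<^sub>\<ell>\<^sub>1 Q\<close>. A lattice sum, which converges because
  \<open>s1 > 3 s2 / (2 s2 - 1)\<close>, gives \<open>\<parallel>\<partial>\<^sub>x u\<parallel>\<^sub>\<ell>\<^sub>1 \<le> C \<surd>Q\<close>, hence \<open>Q' \<le> C Q\<^sup>3\<^sup>/\<^sup>2\<close>, and comparison
  with this ODE yields \<open>Q(t) \<le> 2 Q(0)\<close> for \<open>t \<le> 1 / (8 C (\<parallel>u\<^sub>0\<parallel> + 1))\<close>, uniformly in \<open>n\<close>.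
  Compact sets are bounded, so they share such a time.
\<close>

lemma wdot_add: "wdot \<omega> (a + b) = wdot \<omega> a + wdot \<omega> b"
  by (simp add: wdot_def algebra_simps)

lemma wpdot_add: "wpdot \<omega> (a + b) = wpdot \<omega> a + wpdot \<omega> b"
  by (simp add: wpdot_def algebra_simps)

lemma wdot_uminus: "wdot \<omega> (- a) = - wdot \<omega> a"
  by (simp add: wdot_def)

lemma wpdot_uminus: "wpdot \<omega> (- a) = - wpdot \<omega> a"
  by (simp add: wpdot_def)

lemma wdot_diff: "wdot \<omega> (a - b) = wdot \<omega> a - wdot \<omega> b"
  by (simp add: wdot_def algebra_simps)

lemma wpdot_diff: "wpdot \<omega> (a - b) = wpdot \<omega> a - wpdot \<omega> b"
  by (simp add: wpdot_def algebra_simps)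

lemma wdot_sq_plus_wpdot_sq:
  "(wdot \<omega> k)\<^sup>2 + (wpdot \<omega> k)\<^sup>2
     = ((fst \<omega>)\<^sup>2 + (snd \<omega>)\<^sup>2) * ((of_int (fst k))\<^sup>2 + (of_int (snd k))\<^sup>2)"
  by (simp add: wdot_def wpdot_def power2_eq_square algebra_simps)

lemma incommensurable_nonzero: "incommensurable \<omega> \<Longrightarrow> \<omega> \<noteq> 0"
proof
  assume "incommensurable \<omega>" "\<omega> = 0"
  then show False
    unfolding incommensurable_def by (auto dest: spec[of _ 1])
qed

lemma sq_norm_pos_of_nonzero: "\<omega> \<noteq> 0 \<Longrightarrow> 0 < (fst \<omega>)\<^sup>2 + (snd \<omega>)\<^sup>2"
  for \<omega> :: "real \<times> real"
  by (simp add: sum_power2_gt_zero_iff prod_eq_iff)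

lemma abs_le_square_int: "\<bar>m\<bar> \<le> m\<^sup>2" for m :: int
proof (cases "m = 0")
  case False
  then have "\<bar>m\<bar> * 1 \<le> \<bar>m\<bar> * \<bar>m\<bar>" by (intro mult_left_mono) auto
  then show ?thesis by (simp add: power2_eq_square abs_mult_self_eq)
qed simp

lemma finite_int_pairs_sq_le:
  "finite {k :: int \<times> int. (of_int (fst k))\<^sup>2 + (of_int (snd k))\<^sup>2 \<le> (R :: real)}"
proof (rule finite_subset)
  let ?M = "\<lceil>R\<rceil>"
  show "{k :: int \<times> int. (of_int (fst k))\<^sup>2 + (of_int (snd k))\<^sup>2 \<le> R} \<subseteq> {-?M..?M} \<times> {-?M..?M}"
  proof
    fix k :: "int \<times> int"
    assume "k \<in> {k. (of_int (fst k))\<^sup>2 + (of_int (snd k))\<^sup>2 \<le> R}"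
    then have k: "(of_int (fst k))\<^sup>2 + (of_int (snd k))\<^sup>2 \<le> R" by simp
    have "real_of_int \<bar>fst k\<bar> \<le> real_of_int ((fst k)\<^sup>2)"
      "real_of_int \<bar>snd k\<bar> \<le> real_of_int ((snd k)\<^sup>2)"
      using abs_le_square_int[of "fst k"] abs_le_square_int[of "snd k"] by (simp_all only: of_int_le_iff)
    with k have "of_int \<bar>fst k\<bar> \<le> R" "of_int \<bar>snd k\<bar> \<le> R"
      using zero_le_power2[of "real_of_int (fst k)"] zero_le_power2[of "real_of_int (snd k)"] by simp_all
    then have "\<bar>fst k\<bar> \<le> ?M" "\<bar>snd k\<bar> \<le> ?M"
      using le_of_int_ceiling[of R] by linarith+
    then show "k \<in> {-?M..?M} \<times> {-?M..?M}" by (auto simp: abs_le_iff mem_Times_iff)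
  qed
qed simp

definition mode_box :: "real \<times> real \<Rightarrow> real \<Rightarrow> (int \<times> int) set" where
  "mode_box \<omega> r = {k. \<bar>wdot \<omega> k\<bar> \<le> r \<and> \<bar>wpdot \<omega> k\<bar> \<le> r}"

lemma uminus_mem_mode_box: "k \<in> mode_box \<omega> r \<Longrightarrow> - k \<in> mode_box \<omega> r"
  by (simp add: mode_box_def wdot_uminus wpdot_uminus)

lemma finite_mode_box:
  assumes "\<omega> \<noteq> 0"
  shows "finite (mode_box \<omega> r)"
proof -
  define c where "c = (fst \<omega>)\<^sup>2 + (snd \<omega>)\<^sup>2"
  have c: "0 < c" using sq_norm_pos_of_nonzero[OF assms] by (simp add: c_def)
  have "mode_box \<omega> r \<subseteq> {k. (of_int (fst k))\<^sup>2 + (of_int (snd k))\<^sup>2 \<le> 2 * r\<^sup>2 / c}"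
  proof
    fix k assume "k \<in> mode_box \<omega> r"
    then have "(wdot \<omega> k)\<^sup>2 \<le> r\<^sup>2" "(wpdot \<omega> k)\<^sup>2 \<le> r\<^sup>2"
      unfolding mode_box_def by (auto simp: power2_le_iff_abs_le)
    then have "c * ((of_int (fst k))\<^sup>2 + (of_int (snd k))\<^sup>2) \<le> 2 * r\<^sup>2"
      using wdot_sq_plus_wpdot_sq[of \<omega> k] by (simp add: c_def)
    then show "k \<in> {k. (of_int (fst k))\<^sup>2 + (of_int (snd k))\<^sup>2 \<le> 2 * r\<^sup>2 / c}"
      using c by (simp add: field_simps)
  qed
  then show ?thesis by (rule finite_subset) (rule finite_int_pairs_sq_le)
qed

section \<open>Trilinear sums over pairs of modes\<close>

definition sum_pairs :: "(int \<times> int) set \<Rightarrow> ((int \<times> int) \<times> (int \<times> int)) set" where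
  "sum_pairs S = {p \<in> S \<times> S. fst p + snd p \<in> S}"

lemma sum_pairs_swap:
  "(\<Sum>(a, b)\<in>sum_pairs S. F a b) = (\<Sum>(a, b)\<in>sum_pairs S. F b a)"
  by (rule sum.reindex_bij_witness[where i="\<lambda>(a, b). (b, a)" and j="\<lambda>(a, b). (b, a)"])
     (auto simp: sum_pairs_def add.commute)

lemma sum_pairs_reflect:
  assumes "\<And>k. k \<in> S \<Longrightarrow> - k \<in> S"
  shows "(\<Sum>(a, b)\<in>sum_pairs S. F a b) = (\<Sum>(a, b)\<in>sum_pairs S. F (- a) (a + b))"
  by (rule sum.reindex_bij_witness[where i="\<lambda>(a, b). (- a, a + b)" and j="\<lambda>(a, b). (- a, a + b)"])
     (auto simp: sum_pairs_def assms simp del: uminus_Pair add_Pair)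

lemma sum_convolution_eq_sum_pairs:
  fixes G v :: "int \<times> int \<Rightarrow> 'a :: comm_ring"
  assumes fin: "finite S" and supp: "\<And>k. k \<notin> S \<Longrightarrow> v k = 0"
  shows "(\<Sum>k\<in>S. G k * (\<Sum>j\<in>S. v j * v (k - j))) = (\<Sum>(a, b)\<in>sum_pairs S. G (a + b) * v a * v b)"
proof -
  have "(\<Sum>k\<in>S. G k * (\<Sum>j\<in>S. v j * v (k - j))) = (\<Sum>(k, j)\<in>S \<times> S. G k * v j * v (k - j))"
    by (simp add: sum_distrib_left sum.cartesian_product mult.assoc)
  also have "\<dots> = (\<Sum>(k, j)\<in>{p \<in> S \<times> S. fst p - snd p \<in> S}. G k * v j * v (k - j))"
    by (rule sum.mono_neutral_right) (auto simp: fin, metis mult_zero_right supp)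
  also have "\<dots> = (\<Sum>(a, b)\<in>sum_pairs S. G (a + b) * v a * v b)"
    by (rule sum.reindex_bij_witness[where i="\<lambda>(a, b). (a + b, a)" and j="\<lambda>(k, j). (j, k - j)"])
       (auto simp: sum_pairs_def)
  finally show ?thesis .
qed

lemma sum_pairs_trilinear_le:
  fixes A B g :: "int \<times> int \<Rightarrow> real"
  assumes fin: "finite S" and g: "\<And>k. 0 \<le> g k"
  shows "(\<Sum>(a, b)\<in>sum_pairs S. \<bar>A (a + b)\<bar> * g a * \<bar>B b\<bar>)
           \<le> (\<Sum>a\<in>S. g a) * (((\<Sum>c\<in>S. (A c)\<^sup>2) + (\<Sum>c\<in>S. (B c)\<^sup>2)) / 2)"
proof -
  let ?T = "\<lambda>a. {b \<in> S. a + b \<in> S}"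
  have "(\<Sum>(a, b)\<in>sum_pairs S. \<bar>A (a + b)\<bar> * g a * \<bar>B b\<bar>)
        = (\<Sum>a\<in>S. g a * (\<Sum>b\<in>?T a. \<bar>A (a + b)\<bar> * \<bar>B b\<bar>))"
  proof -
    have "sum_pairs S = Sigma S ?T" by (auto simp: sum_pairs_def)
    then show ?thesis by (simp add: sum.Sigma[symmetric] fin sum_distrib_left mult_ac)
  qed
  also have "\<dots> \<le> (\<Sum>a\<in>S. g a * (((\<Sum>c\<in>S. (A c)\<^sup>2) + (\<Sum>c\<in>S. (B c)\<^sup>2)) / 2))"
  proof (intro sum_mono mult_left_mono[OF _ g])
    fix a
    have "(\<Sum>b\<in>?T a. \<bar>A (a + b)\<bar> * \<bar>B b\<bar>) \<le> (\<Sum>b\<in>?T a. ((A (a + b))\<^sup>2 + (B b)\<^sup>2) / 2)"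
      using sum_squares_bound[of "\<bar>A (a + _)\<bar>" "\<bar>B _\<bar>"] by (intro sum_mono) (simp add: mult_ac)
    also have "\<dots> = ((\<Sum>c\<in>(+) a ` ?T a. (A c)\<^sup>2) + (\<Sum>b\<in>?T a. (B b)\<^sup>2)) / 2"
      by (simp add: sum.distrib sum.reindex inj_on_def flip: sum_divide_distrib)
    also have "\<dots> \<le> ((\<Sum>c\<in>S. (A c)\<^sup>2) + (\<Sum>c\<in>S. (B c)\<^sup>2)) / 2"
      by (intro divide_right_mono add_mono sum_mono2 fin) auto
    finally show "(\<Sum>b\<in>?T a. \<bar>A (a + b)\<bar> * \<bar>B b\<bar>) \<le> ((\<Sum>c\<in>S. (A c)\<^sup>2) + (\<Sum>c\<in>S. (B c)\<^sup>2)) / 2" .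
  qed
  also have "\<dots> = (\<Sum>a\<in>S. g a) * (((\<Sum>c\<in>S. (A c)\<^sup>2) + (\<Sum>c\<in>S. (B c)\<^sup>2)) / 2)"
    by (simp add: sum_distrib_right)
  finally show ?thesis .
qed

lemma sum_pairs_trilinear_le':
  fixes A B g :: "int \<times> int \<Rightarrow> real"
  assumes "finite S" and "\<And>k. 0 \<le> g k"
  shows "(\<Sum>(a, b)\<in>sum_pairs S. \<bar>A (a + b)\<bar> * \<bar>B a\<bar> * g b)
           \<le> (\<Sum>a\<in>S. g a) * (((\<Sum>c\<in>S. (A c)\<^sup>2) + (\<Sum>c\<in>S. (B c)\<^sup>2)) / 2)"
proof -
  have "(\<Sum>(a, b)\<in>sum_pairs S. \<bar>A (a + b)\<bar> * \<bar>B a\<bar> * g b)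
        = (\<Sum>(a, b)\<in>sum_pairs S. \<bar>A (b + a)\<bar> * \<bar>B b\<bar> * g a)"
    by (rule sum_pairs_swap)
  also have "\<dots> = (\<Sum>(a, b)\<in>sum_pairs S. \<bar>A (a + b)\<bar> * g a * \<bar>B b\<bar>)"
    by (simp add: add.commute mult_ac)
  also have "\<dots> \<le> (\<Sum>a\<in>S. g a) * (((\<Sum>c\<in>S. (A c)\<^sup>2) + (\<Sum>c\<in>S. (B c)\<^sup>2)) / 2)"
    by (rule sum_pairs_trilinear_le[OF assms])
  finally show ?thesis .
qed

lemma cmod_of_real_mult3: "cmod (complex_of_real r * z1 * z2 * z3) = \<bar>r\<bar> * cmod z1 * cmod z2 * cmod z3"
  by (simp add: norm_mult)

text \<open>For real-valued \<open>v\<close> the reflection \<open>(a, b) \<mapsto> (-a, a + b)\<close> turns the sum into the complex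
  conjugate of the same sum with \<open>xi b\<close> replaced by \<open>xi (a + b)\<close>; hence only \<open>xi a\<close> survives in the
  imaginary part, and it carries no derivative loss.\<close>
lemma Im_sum_pairs_real_le:
  fixes v :: "int \<times> int \<Rightarrow> complex" and lam xi :: "int \<times> int \<Rightarrow> real"
  assumes fin: "finite S" and sym: "\<And>k. k \<in> S \<Longrightarrow> - k \<in> S"
    and real: "\<And>k. v (- k) = cnj (v k)"
    and lam_nonneg: "\<And>k. 0 \<le> lam k"
    and xi_add: "\<And>a b. xi (a + b) = xi a + xi b"
  shows "\<bar>Im (\<Sum>(a, b)\<in>sum_pairs S. of_real (lam (a + b) * lam b * xi b) * cnj (v (a + b)) * v b * v a)\<bar>
         \<le> (\<Sum>a\<in>S. \<bar>xi a\<bar> * cmod (v a)) * (\<Sum>c\<in>S. (lam c)\<^sup>2 * (cmod (v c))\<^sup>2) / 2"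
proof -
  define X where "X = (\<Sum>(a, b)\<in>sum_pairs S. of_real (lam (a + b) * lam b * xi b) * cnj (v (a + b)) * v b * v a)"
  define Y where "Y = (\<Sum>(a, b)\<in>sum_pairs S. of_real (lam (a + b) * lam b * xi (a + b)) * cnj (v (a + b)) * v b * v a)"
  have "cnj X = (\<Sum>(a, b)\<in>sum_pairs S. of_real (lam (a + b) * lam b * xi b) * v (a + b) * cnj (v b) * v (- a))"
    unfolding X_def by (simp add: split_def real)
  also have "\<dots> = (\<Sum>(a, b)\<in>sum_pairs S. of_real (lam (- a + (a + b)) * lam (a + b) * xi (a + b))
                      * v (- a + (a + b)) * cnj (v (a + b)) * v (- (- a)))"
    by (rule sum_pairs_reflect[OF sym, where
          F = "\<lambda>a b. of_real (lam (a + b) * lam b * xi b) * v (a + b) * cnj (v b) * v (- a)"])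
  also have "\<dots> = Y"
    unfolding Y_def by (intro sum.cong) (auto simp: mult_ac)
  finally have XY: "X - Y = of_real (2 * Im X) * \<i>"
    by (simp add: complex_eq_iff)
  have XY': "X - Y = (\<Sum>(a, b)\<in>sum_pairs S. of_real (- (lam (a + b) * lam b * xi a)) * cnj (v (a + b)) * v b * v a)"
    unfolding X_def Y_def by (simp add: sum_subtractf[symmetric] split_def xi_add algebra_simps)
  have "2 * \<bar>Im X\<bar> = cmod (X - Y)"
    using XY by (simp add: norm_mult)
  also have "\<dots> \<le> (\<Sum>(a, b)\<in>sum_pairs S. \<bar>lam (a + b) * cmod (v (a + b))\<bar> * (\<bar>xi a\<bar> * cmod (v a))
                              * \<bar>lam b * cmod (v b)\<bar>)"
    unfolding XY' by (auto intro!: order_trans[OF norm_sum] sum_mono simp only: cmod_of_real_mult3)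
       (simp add: abs_mult lam_nonneg mult_ac)
  also have "\<dots> \<le> (\<Sum>a\<in>S. \<bar>xi a\<bar> * cmod (v a)) * (\<Sum>c\<in>S. (lam c)\<^sup>2 * (cmod (v c))\<^sup>2)"
    using sum_pairs_trilinear_le[OF fin, where g = "\<lambda>a. \<bar>xi a\<bar> * cmod (v a)"
          and A = "\<lambda>c. lam c * cmod (v c)" and B = "\<lambda>c. lam c * cmod (v c)"]
    by (simp add: power_mult_distrib)
  finally show ?thesis
    unfolding X_def[symmetric] by simp
qed

lemma cmod_sum_pairs_commutator_le:
  fixes v :: "int \<times> int \<Rightarrow> complex" and lam xi :: "int \<times> int \<Rightarrow> real"
  assumes fin: "finite S" and lam_nonneg: "\<And>k. 0 \<le> lam k" and K: "0 \<le> K"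
    and commutator: "\<And>a b. \<bar>lam (a + b) - lam b\<bar> * \<bar>xi b\<bar> \<le> K * (lam a * \<bar>xi b\<bar> + \<bar>xi a\<bar> * lam b)"
  shows "cmod (\<Sum>(a, b)\<in>sum_pairs S. of_real (lam (a + b) * (lam (a + b) - lam b) * xi b)
                                        * cnj (v (a + b)) * v a * v b)
         \<le> 2 * K * (\<Sum>a\<in>S. \<bar>xi a\<bar> * cmod (v a)) * (\<Sum>c\<in>S. (lam c)\<^sup>2 * (cmod (v c))\<^sup>2)"
proof -
  define A where "A c = lam c * cmod (v c)" for c
  define g where "g c = \<bar>xi c\<bar> * cmod (v c)" for c
  have g: "0 \<le> g c" for c by (simp add: g_def)
  have "cmod (\<Sum>(a, b)\<in>sum_pairs S. of_real (lam (a + b) * (lam (a + b) - lam b) * xi b)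
                                        * cnj (v (a + b)) * v a * v b)
        \<le> (\<Sum>(a, b)\<in>sum_pairs S. K * (\<bar>A (a + b)\<bar> * \<bar>A a\<bar> * g b + \<bar>A (a + b)\<bar> * g a * \<bar>A b\<bar>))"
  proof (rule order_trans[OF norm_sum], rule sum_mono, clarify)
    fix a b
    have "cmod (of_real (lam (a + b) * (lam (a + b) - lam b) * xi b) * cnj (v (a + b)) * v a * v b)
        = A (a + b) * cmod (v a) * cmod (v b) * (\<bar>lam (a + b) - lam b\<bar> * \<bar>xi b\<bar>)"
      by (simp only: cmod_of_real_mult3) (simp add: abs_mult A_def lam_nonneg mult_ac)
    also have "\<dots> \<le> A (a + b) * cmod (v a) * cmod (v b) * (K * (lam a * \<bar>xi b\<bar> + \<bar>xi a\<bar> * lam b))"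
      by (rule mult_left_mono[OF commutator]) (simp add: A_def lam_nonneg)
    also have "\<dots> = K * (\<bar>A (a + b)\<bar> * \<bar>A a\<bar> * g b + \<bar>A (a + b)\<bar> * g a * \<bar>A b\<bar>)"
      by (simp add: A_def g_def lam_nonneg algebra_simps)
    finally show "cmod (of_real (lam (a + b) * (lam (a + b) - lam b) * xi b) * cnj (v (a + b)) * v a * v b)
        \<le> K * (\<bar>A (a + b)\<bar> * \<bar>A a\<bar> * g b + \<bar>A (a + b)\<bar> * g a * \<bar>A b\<bar>)" .
  qed
  also have "\<dots> = K * ((\<Sum>(a, b)\<in>sum_pairs S. \<bar>A (a + b)\<bar> * \<bar>A a\<bar> * g b)
                        + (\<Sum>(a, b)\<in>sum_pairs S. \<bar>A (a + b)\<bar> * g a * \<bar>A b\<bar>))"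
    by (simp add: sum_distrib_left sum.distrib split_def distrib_left)
  also have "\<dots> \<le> K * ((\<Sum>a\<in>S. g a) * (\<Sum>c\<in>S. (A c)\<^sup>2) + (\<Sum>a\<in>S. g a) * (\<Sum>c\<in>S. (A c)\<^sup>2))"
    using sum_pairs_trilinear_le[OF fin g, where A = A and B = A]
      sum_pairs_trilinear_le'[OF fin g, where A = A and B = A] K
    by (intro mult_left_mono add_mono) auto
  finally show ?thesis
    by (simp add: A_def g_def power_mult_distrib)
qed

text \<open>Symmetrising in \<open>(a, b)\<close> replaces \<open>xi (a + b)\<close> by \<open>2 xi b\<close>. Splitting
  \<open>lam (a + b)\<^sup>2 = lam (a + b) (lam (a + b) - lam b) + lam (a + b) lam b\<close> leaves a commutator and a
  term whose imaginary part is small by reality, so no derivative falls on the highest frequency.\<close>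
lemma Im_sum_pairs_weighted_le:
  fixes v :: "int \<times> int \<Rightarrow> complex" and lam xi :: "int \<times> int \<Rightarrow> real"
  assumes fin: "finite S" and sym: "\<And>k. k \<in> S \<Longrightarrow> - k \<in> S"
    and real: "\<And>k. v (- k) = cnj (v k)"
    and lam_nonneg: "\<And>k. 0 \<le> lam k"
    and xi_add: "\<And>a b. xi (a + b) = xi a + xi b"
    and K: "0 \<le> K"
    and commutator: "\<And>a b. \<bar>lam (a + b) - lam b\<bar> * \<bar>xi b\<bar> \<le> K * (lam a * \<bar>xi b\<bar> + \<bar>xi a\<bar> * lam b)"
  shows "\<bar>Im (\<Sum>(a, b)\<in>sum_pairs S. of_real ((lam (a + b))\<^sup>2 * xi (a + b)) * cnj (v (a + b)) * v a * v b)\<bar>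
         \<le> (4 * K + 1) * (\<Sum>a\<in>S. \<bar>xi a\<bar> * cmod (v a)) * (\<Sum>c\<in>S. (lam c)\<^sup>2 * (cmod (v c))\<^sup>2)"
proof -
  define G where "G = (\<Sum>a\<in>S. \<bar>xi a\<bar> * cmod (v a))"
  define E where "E = (\<Sum>c\<in>S. (lam c)\<^sup>2 * (cmod (v c))\<^sup>2)"
  define N1 where "N1 = (\<Sum>(a, b)\<in>sum_pairs S. of_real ((lam (a + b))\<^sup>2 * xi b) * cnj (v (a + b)) * v a * v b)"
  define P where "P = (\<Sum>(a, b)\<in>sum_pairs S. of_real (lam (a + b) * (lam (a + b) - lam b) * xi b)
                                                * cnj (v (a + b)) * v a * v b)"
  define X where "X = (\<Sum>(a, b)\<in>sum_pairs S. of_real (lam (a + b) * lam b * xi b) * cnj (v (a + b)) * v b * v a)"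
  have "(\<Sum>(a, b)\<in>sum_pairs S. of_real ((lam (a + b))\<^sup>2 * xi (a + b)) * cnj (v (a + b)) * v a * v b)
        = (\<Sum>(a, b)\<in>sum_pairs S. of_real ((lam (a + b))\<^sup>2 * xi a) * cnj (v (a + b)) * v a * v b) + N1"
    unfolding N1_def by (simp add: xi_add sum.distrib[symmetric] split_def algebra_simps)
  also have "(\<Sum>(a, b)\<in>sum_pairs S. of_real ((lam (a + b))\<^sup>2 * xi a) * cnj (v (a + b)) * v a * v b) = N1"
    unfolding N1_def by (subst sum_pairs_swap) (simp add: add.commute mult_ac)
  also have "N1 = P + X"
    unfolding N1_def P_def X_def
    by (simp add: sum.distrib[symmetric] split_def algebra_simps power2_eq_square)
  finally have "\<bar>Im (\<Sum>(a, b)\<in>sum_pairs S. of_real ((lam (a + b))\<^sup>2 * xi (a + b)) * cnj (v (a + b)) * v a * v b)\<bar>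
                \<le> 2 * (cmod P + \<bar>Im X\<bar>)"
    using abs_Im_le_cmod[of P] by simp
  also have "\<dots> \<le> 2 * (2 * K * G * E + G * E / 2)"
    using cmod_sum_pairs_commutator_le[where lam = lam and xi = xi and v = v, OF fin lam_nonneg K commutator]
      Im_sum_pairs_real_le[where lam = lam and xi = xi and v = v, OF fin sym real lam_nonneg xi_add]
    unfolding P_def X_def G_def E_def by (intro mult_left_mono add_mono) auto
  finally show ?thesis
    by (simp add: G_def E_def algebra_simps)
qed

lemma jbr_ge_one: "1 \<le> jbr a"
  by (simp add: jbr_def)

lemma jbr_pos: "0 < jbr a"
  using jbr_ge_one[of a] by linarith

lemma abs_le_jbr: "\<bar>a\<bar> \<le> jbr a"
  unfolding jbr_def by (rule real_le_rsqrt) simp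

lemma jbr_lipschitz: "\<bar>jbr a - jbr b\<bar> \<le> \<bar>a - b\<bar>"
proof -
  have "jbr a = norm (1 :: real, a)" "jbr b = norm (1 :: real, b)"
    by (simp_all add: jbr_def norm_Pair)
  then show ?thesis
    using norm_triangle_ineq3[of "(1 :: real, a)" "(1, b)"] by (simp add: norm_Pair)
qed

lemma jbr_add_le: "jbr (a + b) \<le> jbr a + jbr b"
  using jbr_lipschitz[of "a + b" a] abs_le_jbr[of b] by simp

lemma powr_add_le:
  fixes a b s :: real
  assumes "0 \<le> a" "0 \<le> b" "0 < s" "s \<le> 1"
  shows "(a + b) powr s \<le> a powr s + b powr s"
proof (cases "a = 0 \<or> b = 0")
  case False
  with assms have a: "0 < a" and b: "0 < b" by auto
  have "(a + b) powr s = (a + b) * (a + b) powr (s - 1)"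
    using a b by (simp add: powr_diff field_simps)
  also have "\<dots> = a * (a + b) powr (s - 1) + b * (a + b) powr (s - 1)"
    by (simp add: distrib_right)
  also have "\<dots> \<le> a * a powr (s - 1) + b * b powr (s - 1)"
    using a b assms by (intro add_mono mult_left_mono powr_mono2') auto
  also have "\<dots> = a powr s + b powr s"
    using a b by (simp add: powr_diff field_simps)
  finally show ?thesis .
qed (use assms in auto)

lemma jbr_powr_diff_le:
  assumes "0 < s" "s \<le> 1"
  shows "\<bar>jbr (a + b) powr s - jbr b powr s\<bar> \<le> jbr a powr s"
proof -
  have diff: "Y powr s - X powr s \<le> jbr a powr s" if "X \<le> Y" "1 \<le> X" "Y - X \<le> jbr a" for X Y
  proof -
    have "Y powr s = (X + (Y - X)) powr s" by simp
    also have "\<dots> \<le> X powr s + (Y - X) powr s"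
      using that assms by (intro powr_add_le) auto
    also have "(Y - X) powr s \<le> jbr a powr s"
      using that assms by (intro powr_mono2) auto
    finally show ?thesis by simp
  qed
  have "\<bar>jbr (a + b) - jbr b\<bar> \<le> jbr a"
    using jbr_lipschitz[of "a + b" b] abs_le_jbr[of a] by simp
  then show ?thesis
    using diff[of "jbr b" "jbr (a + b)"] diff[of "jbr (a + b)" "jbr b"] jbr_ge_one[of b]
      jbr_ge_one[of "a + b"] powr_mono2[OF _ _ , of s "jbr b" "jbr (a + b)"]
      powr_mono2[of s "jbr (a + b)" "jbr b"] assms
    by (cases "jbr b \<le> jbr (a + b)") (auto simp: abs_le_iff)
qed

lemma powr_diff_le_mvt:
  fixes A B s :: real
  assumes A: "1 \<le> A" and B: "1 \<le> B" and s: "1 \<le> s"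
  shows "\<bar>A powr s - B powr s\<bar> \<le> s * \<bar>A - B\<bar> * max A B powr (s - 1)"
proof -
  have mvt: "Y powr s - X powr s \<le> s * (Y - X) * Y powr (s - 1)" if XY: "1 \<le> X" "X < Y" for X Y :: real
  proof -
    have "\<exists>z. X < z \<and> z < Y \<and> Y powr s - X powr s = (Y - X) * (s * z powr (s - 1))"
      by (rule MVT2[OF \<open>X < Y\<close>]) (use XY in \<open>auto intro!: derivative_eq_intros\<close>)
    then obtain z where z: "X < z" "z < Y" "Y powr s - X powr s = (Y - X) * (s * z powr (s - 1))"
      by blast
    have "z powr (s - 1) \<le> Y powr (s - 1)"
      using z XY s by (intro powr_mono2) auto
    with z XY s show ?thesis
      by (simp add: mult_left_mono mult.assoc mult.left_commute[of s])
  qed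
  consider "A = B" | "B < A" | "A < B" by linarith
  then show ?thesis
  proof cases
    case 2
    then show ?thesis using mvt[OF B 2] powr_mono2[of s B A] B s by (simp add: max_def)
  next
    case 3
    then show ?thesis using mvt[OF A 3] powr_mono2[of s A B] A s by (simp add: max_def abs_minus_commute)
  qed simp
qed

lemma mult_jbr_powr_le: "\<bar>a\<bar> * jbr a powr (s - 1) \<le> jbr a powr s"
proof -
  have "\<bar>a\<bar> * jbr a powr (s - 1) \<le> jbr a * jbr a powr (s - 1)"
    using abs_le_jbr[of a] by (intro mult_right_mono) auto
  also have "\<dots> = jbr a powr s"
    using jbr_pos[of a] by (simp add: powr_diff field_simps)
  finally show ?thesis .
qed

lemma jbr_powr_commutator_le:
  assumes s: "1 \<le> s"
  shows "\<bar>jbr (a + b) powr s - jbr b powr s\<bar> * \<bar>b\<bar>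
         \<le> (s * 2 powr (s - 1)) * (jbr a powr s * \<bar>b\<bar> + \<bar>a\<bar> * jbr b powr s)"
proof -
  have "max (jbr (a + b)) (jbr b) powr (s - 1) \<le> (2 * max (jbr a) (jbr b)) powr (s - 1)"
    using jbr_add_le[of a b] jbr_ge_one[of a] jbr_ge_one[of b] jbr_ge_one[of "a + b"] s
    by (intro powr_mono2) auto
  also have "\<dots> = 2 powr (s - 1) * max (jbr a) (jbr b) powr (s - 1)"
    using jbr_pos[of a] jbr_pos[of b] by (simp add: powr_mult)
  also have "max (jbr a) (jbr b) powr (s - 1) \<le> jbr a powr (s - 1) + jbr b powr (s - 1)"
    by (simp add: max_def)
  finally have max_le: "max (jbr (a + b)) (jbr b) powr (s - 1)
                        \<le> 2 powr (s - 1) * (jbr a powr (s - 1) + jbr b powr (s - 1))"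
    by simp
  have "\<bar>jbr (a + b) powr s - jbr b powr s\<bar> * \<bar>b\<bar>
        \<le> (s * \<bar>jbr (a + b) - jbr b\<bar> * max (jbr (a + b)) (jbr b) powr (s - 1)) * \<bar>b\<bar>"
    using powr_diff_le_mvt[OF jbr_ge_one jbr_ge_one s] by (intro mult_right_mono) auto
  also have "\<dots> \<le> (s * \<bar>a\<bar> * (2 powr (s - 1) * (jbr a powr (s - 1) + jbr b powr (s - 1)))) * \<bar>b\<bar>"
    using jbr_lipschitz[of "a + b" b] max_le s by (intro mult_right_mono mult_mono) auto
  also have "\<dots> = (s * 2 powr (s - 1))
                   * ((\<bar>a\<bar> * jbr a powr (s - 1)) * \<bar>b\<bar> + \<bar>a\<bar> * (\<bar>b\<bar> * jbr b powr (s - 1)))"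
    by (simp add: algebra_simps)
  also have "\<dots> \<le> (s * 2 powr (s - 1)) * (jbr a powr s * \<bar>b\<bar> + \<bar>a\<bar> * jbr b powr s)"
    using mult_jbr_powr_le[of a s] mult_jbr_powr_le[of b s] s
    by (intro mult_left_mono add_mono mult_right_mono mult_left_mono) auto
  finally show ?thesis .
qed

section \<open>Lattice sums and the \<open>\<ell>\<^sup>1\<close> bound on \<open>\<partial>\<^sub>x u\<close>\<close>

lemma bounded_sums_int_powr:
  fixes \<alpha> :: real
  assumes "1 < \<alpha>"
  obtains Z where "\<And>M. finite M \<Longrightarrow> (\<Sum>m\<in>M. (1 + \<bar>of_int m\<bar>) powr (- \<alpha>)) \<le> Z"
proof
  define f where "f n = (1 + real n) powr (- \<alpha>)" for n :: nat
  have "summable (\<lambda>n. real (Suc n) powr (- \<alpha>))"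
    using assms by (subst summable_Suc_iff) (simp add: summable_real_powr_iff)
  then have f: "summable f"
    unfolding f_def by (simp add: add.commute)
  have half: "(\<Sum>m\<in>N. f (nat \<bar>m\<bar>)) \<le> suminf f" if "finite N" "inj_on (\<lambda>m. nat \<bar>m\<bar>) N" for N
  proof -
    have "(\<Sum>m\<in>N. f (nat \<bar>m\<bar>)) = (\<Sum>n\<in>(\<lambda>m. nat \<bar>m\<bar>) ` N. f n)"
      using that by (simp add: sum.reindex)
    also have "\<dots> \<le> suminf f"
      using that f by (intro sum_le_suminf) (auto simp: f_def[abs_def])
    finally show ?thesis .
  qed
  fix M :: "int set" assume M: "finite M"
  have "(\<Sum>m\<in>M. (1 + \<bar>of_int m\<bar>) powr (- \<alpha>))
        = (\<Sum>m\<in>{m\<in>M. 0 \<le> m}. f (nat \<bar>m\<bar>)) + (\<Sum>m\<in>{m\<in>M. m < 0}. f (nat \<bar>m\<bar>))"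
    using M by (subst sum.union_disjoint[symmetric]) (auto simp: f_def intro: sum.cong)
  also have "\<dots> \<le> suminf f + suminf f"
    using M by (intro add_mono half) (auto simp: inj_on_def)
  finally show "(\<Sum>m\<in>M. (1 + \<bar>of_int m\<bar>) powr (- \<alpha>)) \<le> 2 * suminf f" by simp
qed

lemma eq_zero_of_wdot_wpdot_small:
  assumes "\<bar>wdot \<omega> k\<bar> < h" "\<bar>wpdot \<omega> k\<bar> < h" "2 * h\<^sup>2 \<le> (fst \<omega>)\<^sup>2 + (snd \<omega>)\<^sup>2"
  shows "k = 0"
proof (rule ccontr)
  assume "k \<noteq> 0"
  then have "1 \<le> \<bar>fst k\<bar> \<or> 1 \<le> \<bar>snd k\<bar>"
    by (auto simp: prod_eq_iff)
  then have "1 \<le> (of_int (fst k))\<^sup>2 + (of_int (snd k) :: real)\<^sup>2"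
    using abs_le_square_int[of "fst k"] abs_le_square_int[of "snd k"]
    by (auto simp flip: of_int_power intro: add_increasing add_increasing2)
  moreover have "(wdot \<omega> k)\<^sup>2 + (wpdot \<omega> k)\<^sup>2 < 2 * h\<^sup>2"
    using power_strict_mono[OF assms(1) abs_ge_zero, of 2] power_strict_mono[OF assms(2) abs_ge_zero, of 2]
    by simp
  ultimately show False
    using assms(3) wdot_sq_plus_wpdot_sq[of \<omega> k] sum_power2_ge_zero[of "fst \<omega>" "snd \<omega>"]
    by (smt (verit) mult_left_mono mult_cancel_left1)
qed

lemma inj_frequency_cell:
  assumes h: "0 < h" "2 * h\<^sup>2 \<le> (fst \<omega>)\<^sup>2 + (snd \<omega>)\<^sup>2"
  shows "inj (\<lambda>k. (\<lfloor>wdot \<omega> k / h\<rfloor>, \<lfloor>wpdot \<omega> k / h\<rfloor>))"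
proof (rule injI)
  fix k k' assume eq: "(\<lfloor>wdot \<omega> k / h\<rfloor>, \<lfloor>wpdot \<omega> k / h\<rfloor>) = (\<lfloor>wdot \<omega> k' / h\<rfloor>, \<lfloor>wpdot \<omega> k' / h\<rfloor>)"
  have close: "\<bar>x - x'\<bar> < h" if "\<lfloor>x / h\<rfloor> = \<lfloor>x' / h\<rfloor>" for x x' :: real
  proof -
    have "\<bar>x / h - x' / h\<bar> < 1" using that by linarith
    then show ?thesis using h by (simp add: abs_divide diff_divide_distrib[symmetric])
  qed
  have "\<bar>wdot \<omega> (k - k')\<bar> < h" "\<bar>wpdot \<omega> (k - k')\<bar> < h"
    using eq close by (simp_all add: wdot_diff wpdot_diff)
  then show "k = k'"
    using eq_zero_of_wdot_wpdot_small[of \<omega> "k - k'" h] h by simp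
qed

lemma powr_neg_le_floor_cell:
  fixes h x \<gamma> :: real
  assumes h: "0 < h" "h \<le> 1" and \<gamma>: "0 < \<gamma>"
  shows "(1 + \<bar>x\<bar>) powr (- \<gamma>) \<le> (h / 2) powr (- \<gamma>) * (1 + \<bar>of_int \<lfloor>x / h\<rfloor>\<bar>) powr (- \<gamma>)"
proof -
  have "of_int \<lfloor>x / h\<rfloor> \<le> x / h" "x / h < of_int \<lfloor>x / h\<rfloor> + 1"
    by linarith+
  then have "\<bar>of_int \<lfloor>x / h\<rfloor>\<bar> \<le> \<bar>x / h\<bar> + 1"
    by linarith
  then have "\<bar>of_int \<lfloor>x / h\<rfloor>\<bar> \<le> \<bar>x\<bar> / h + 1"
    using h by (simp add: abs_divide)
  then have "h / 2 * (1 + \<bar>of_int \<lfloor>x / h\<rfloor>\<bar>) \<le> h / 2 * (2 + \<bar>x\<bar> / h)"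
    using h by (intro mult_left_mono) auto
  also have "\<dots> = h + \<bar>x\<bar> / 2"
    using h by (simp add: field_simps)
  finally have "(1 + \<bar>x\<bar>) powr (- \<gamma>) \<le> (h / 2 * (1 + \<bar>of_int \<lfloor>x / h\<rfloor>\<bar>)) powr (- \<gamma>)"
    using h \<gamma> by (intro powr_mono2') auto
  also have "\<dots> = (h / 2) powr (- \<gamma>) * (1 + \<bar>of_int \<lfloor>x / h\<rfloor>\<bar>) powr (- \<gamma>)"
    using h by (subst powr_mult) auto
  finally show ?thesis .
qed

text \<open>Distinct modes have well separated frequencies \<open>(wdot, wpdot)\<close>: indexing them by the
  \<open>h\<close>-cell of their frequency is injective, which dominates the sum by a product of two
  one-dimensional sums.\<close>
lemma bounded_sums_lattice_powr:
  fixes \<omega> :: "real \<times> real" and \<alpha> \<beta> :: real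
  assumes "\<omega> \<noteq> 0" and \<alpha>: "1 < \<alpha>" and \<beta>: "1 < \<beta>"
  obtains C where "\<And>F. finite F \<Longrightarrow>
    (\<Sum>k\<in>F. (1 + \<bar>wdot \<omega> k\<bar>) powr (- \<alpha>) * (1 + \<bar>wpdot \<omega> k\<bar>) powr (- \<beta>)) \<le> C"
proof -
  obtain Za where Za: "\<And>M. finite M \<Longrightarrow> (\<Sum>m\<in>M. (1 + \<bar>of_int m\<bar>) powr (- \<alpha>)) \<le> Za"
    using bounded_sums_int_powr[OF \<alpha>] by blast
  obtain Zb where Zb: "\<And>M. finite M \<Longrightarrow> (\<Sum>m\<in>M. (1 + \<bar>of_int m\<bar>) powr (- \<beta>)) \<le> Zb"
    using bounded_sums_int_powr[OF \<beta>] by blast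
  define c where "c = (fst \<omega>)\<^sup>2 + (snd \<omega>)\<^sup>2"
  define h where "h = min 1 (sqrt (c / 2))"
  have c: "0 < c" using sq_norm_pos_of_nonzero[OF assms(1)] by (simp add: c_def)
  have h: "0 < h" "h \<le> 1" using c by (simp_all add: h_def)
  have "h\<^sup>2 \<le> (sqrt (c / 2))\<^sup>2"
    using h by (intro power_mono) (auto simp: h_def)
  with c have "2 * h\<^sup>2 \<le> c" by simp
  define \<phi> where "\<phi> k = (\<lfloor>wdot \<omega> k / h\<rfloor>, \<lfloor>wpdot \<omega> k / h\<rfloor>)" for k
  have "inj \<phi>"
    unfolding \<phi>_def using h(1) \<open>2 * h\<^sup>2 \<le> c\<close> by (intro inj_frequency_cell) (auto simp: c_def)
  define g where "g p = (1 + \<bar>of_int (fst p)\<bar>) powr (- \<alpha>) * (1 + \<bar>of_int (snd p)\<bar>) powr (- \<beta>)"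
    for p :: "int \<times> int"
  define D where "D = (h / 2) powr (- \<alpha>) * (h / 2) powr (- \<beta>)"
  show ?thesis
  proof
    fix F :: "(int \<times> int) set" assume F: "finite F"
    have "(\<Sum>k\<in>F. (1 + \<bar>wdot \<omega> k\<bar>) powr (- \<alpha>) * (1 + \<bar>wpdot \<omega> k\<bar>) powr (- \<beta>)) \<le> (\<Sum>k\<in>F. D * g (\<phi> k))"
    proof (rule sum_mono)
      fix k
      have "(1 + \<bar>wdot \<omega> k\<bar>) powr (- \<alpha>) * (1 + \<bar>wpdot \<omega> k\<bar>) powr (- \<beta>)
            \<le> ((h / 2) powr (- \<alpha>) * (1 + \<bar>of_int \<lfloor>wdot \<omega> k / h\<rfloor>\<bar>) powr (- \<alpha>))
              * ((h / 2) powr (- \<beta>) * (1 + \<bar>of_int \<lfloor>wpdot \<omega> k / h\<rfloor>\<bar>) powr (- \<beta>))"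
        using powr_neg_le_floor_cell[OF h, where x = "wdot \<omega> k" and \<gamma> = \<alpha>]
          powr_neg_le_floor_cell[OF h, where x = "wpdot \<omega> k" and \<gamma> = \<beta>] \<alpha> \<beta>
        by (intro mult_mono) auto
      then show "(1 + \<bar>wdot \<omega> k\<bar>) powr (- \<alpha>) * (1 + \<bar>wpdot \<omega> k\<bar>) powr (- \<beta>) \<le> D * g (\<phi> k)"
        by (simp add: D_def g_def \<phi>_def mult_ac)
    qed
    also have "\<dots> = D * (\<Sum>p\<in>\<phi> ` F. g p)"
      using \<open>inj \<phi>\<close> by (simp add: sum.reindex inj_on_subset sum_distrib_left)
    also have "\<dots> \<le> D * (\<Sum>p\<in>(fst ` \<phi> ` F) \<times> (snd ` \<phi> ` F). g p)"
    proof (intro mult_left_mono sum_mono2)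
      show "\<phi> ` F \<subseteq> (fst ` \<phi> ` F) \<times> (snd ` \<phi> ` F)"
        by (simp add: subset_iff mem_Times_iff)
    qed (use F in \<open>auto simp: D_def g_def\<close>)
    also have "\<dots> = D * ((\<Sum>m\<in>fst ` \<phi> ` F. (1 + \<bar>of_int m\<bar>) powr (- \<alpha>))
                        * (\<Sum>m\<in>snd ` \<phi> ` F. (1 + \<bar>of_int m\<bar>) powr (- \<beta>)))"
      by (simp add: g_def sum_product sum.cartesian_product split_def)
    also have "\<dots> \<le> D * (Za * Zb)"
      using F Za[of "{}"] by (intro mult_left_mono mult_mono Za Zb sum_nonneg) (auto simp: D_def)
    finally show "(\<Sum>k\<in>F. (1 + \<bar>wdot \<omega> k\<bar>) powr (- \<alpha>) * (1 + \<bar>wpdot \<omega> k\<bar>) powr (- \<beta>)) \<le> D * (Za * Zb)" .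
  qed
qed

definition hweight :: "real \<times> real \<Rightarrow> real \<Rightarrow> real \<Rightarrow> int \<times> int \<Rightarrow> real" where
  "hweight \<omega> s1 s2 k = jbr (wdot \<omega> k) powr (2 * s1) + jbr (wpdot \<omega> k) powr (2 * s2)"

lemma hweight_pos: "0 < hweight \<omega> s1 s2 k"
  using jbr_pos[of "wdot \<omega> k"] by (simp add: hweight_def add_pos_nonneg)

lemma hweight_nonneg: "0 \<le> hweight \<omega> s1 s2 k"
  by (rule less_imp_le[OF hweight_pos])

lemma sq_div_jbr_powr_add_le:
  fixes x y s1 s2 \<theta> :: real
  assumes s: "0 < s1" "0 < s2" and \<theta>: "0 < \<theta>" "\<theta> < 1"
  shows "x\<^sup>2 / (jbr x powr (2 * s1) + jbr y powr (2 * s2))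
         \<le> (2 powr (2 * s1 * \<theta>) * 2 powr (2 * s2 * (1 - \<theta>)))
            * ((1 + \<bar>x\<bar>) powr (2 - 2 * s1 * \<theta>) * (1 + \<bar>y\<bar>) powr (- (2 * s2 * (1 - \<theta>))))"
proof -
  define p q where "p = 1 + \<bar>x\<bar>" and "q = 1 + \<bar>y\<bar>"
  define W where "W = jbr x powr (2 * s1) + jbr y powr (2 * s2)"
  define L where "L = (p / 2) powr (2 * s1 * \<theta>) * (q / 2) powr (2 * s2 * (1 - \<theta>))"
  have pq: "1 \<le> p" "1 \<le> q" by (simp_all add: p_def q_def)
  have "p / 2 \<le> jbr x" "q / 2 \<le> jbr y"
    using jbr_ge_one[of x] abs_le_jbr[of x] jbr_ge_one[of y] abs_le_jbr[of y] by (simp_all add: p_def q_def)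
  then have "L \<le> jbr x powr (2 * s1 * \<theta>) * jbr y powr (2 * s2 * (1 - \<theta>))"
    unfolding L_def using pq s \<theta> by (intro mult_mono powr_mono2) auto
  also have "\<dots> = (jbr x powr (2 * s1)) powr \<theta> * (jbr y powr (2 * s2)) powr (1 - \<theta>)"
    by (simp add: powr_powr)
  also have "\<dots> \<le> W powr \<theta> * W powr (1 - \<theta>)"
    using \<theta> jbr_pos[of x] jbr_pos[of y] by (intro mult_mono powr_mono2) (auto simp: W_def)
  also have "\<dots> = W"
    using jbr_pos[of x] by (simp add: W_def powr_add[symmetric] add_pos_nonneg)
  finally have LW: "L \<le> W" .
  have "x\<^sup>2 / W \<le> p\<^sup>2 / L"
    using LW pq abs_le_square_iff[of x p] by (intro frac_le) (auto simp: L_def p_def)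
  also have "p\<^sup>2 / L = (2 powr (2 * s1 * \<theta>) * 2 powr (2 * s2 * (1 - \<theta>)))
                       * (p powr (2 - 2 * s1 * \<theta>) * q powr (- (2 * s2 * (1 - \<theta>))))"
  proof -
    have "p\<^sup>2 = p powr 2" using pq by (simp add: powr_realpow)
    then show ?thesis
      unfolding L_def using pq by (simp add: powr_divide powr_diff powr_minus field_simps)
  qed
  finally show ?thesis
    by (simp add: W_def p_def q_def)
qed

text \<open>Splitting \<open>hweight\<close> by the weighted AM-GM inequality with weights \<open>\<theta>, 1 - \<theta>\<close> leaves
  summable powers in both lattice directions; such a \<open>\<theta>\<close> exists exactly when
  \<open>s1 > 3 s2 / (2 s2 - 1)\<close>.\<close>
lemma exists_interpolation_exponent:
  fixes s1 s2 :: real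
  assumes s2: "1/2 < s2" and s1: "3 * s2 / (2 * s2 - 1) < s1"
  obtains \<theta> where "0 < \<theta>" "\<theta> < 1" "1 < 2 * s1 * \<theta> - 2" "1 < 2 * s2 * (1 - \<theta>)"
proof -
  have "0 < 3 * s2 / (2 * s2 - 1)" using s2 by simp
  with s1 have "0 < s1" by linarith
  have "3 * s2 < s1 * (2 * s2 - 1)"
    using s1 s2 by (simp add: pos_divide_less_eq)
  then have lt: "3 / (2 * s1) < 1 - 1 / (2 * s2)"
    using \<open>0 < s1\<close> s2 by (simp add: field_simps)
  define \<theta> where "\<theta> = (3 / (2 * s1) + (1 - 1 / (2 * s2))) / 2"
  have \<theta>: "3 / (2 * s1) < \<theta>" "\<theta> < 1 - 1 / (2 * s2)"
    using lt by (simp_all add: \<theta>_def)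
  show ?thesis
  proof
    have "0 < 3 / (2 * s1)" "0 < 1 / (2 * s2)"
      using \<open>0 < s1\<close> s2 by simp_all
    then show "0 < \<theta>" "\<theta> < 1"
      using \<theta> by linarith+
    have "3 < \<theta> * (2 * s1)"
      using \<theta>(1) \<open>0 < s1\<close> by (simp add: pos_divide_less_eq)
    then show "1 < 2 * s1 * \<theta> - 2"
      by (simp add: mult_ac)
    have "1 / (2 * s2) < 1 - \<theta>"
      using \<theta>(2) by simp
    then have "1 < (1 - \<theta>) * (2 * s2)"
      using s2 by (simp add: pos_divide_less_eq)
    then show "1 < 2 * s2 * (1 - \<theta>)"
      by (simp add: mult_ac)
  qed
qed

lemma bounded_sums_wdot_sq_div_hweight:
  assumes "\<omega> \<noteq> 0" "1/2 < s2" "3 * s2 / (2 * s2 - 1) < s1"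
  obtains D where "\<And>F. finite F \<Longrightarrow> (\<Sum>k\<in>F. (wdot \<omega> k)\<^sup>2 / hweight \<omega> s1 s2 k) \<le> D"
proof -
  obtain \<theta> where \<theta>: "0 < \<theta>" "\<theta> < 1" and \<alpha>: "1 < 2 * s1 * \<theta> - 2" and \<beta>: "1 < 2 * s2 * (1 - \<theta>)"
    using exists_interpolation_exponent[OF assms(2,3)] by blast
  have "0 < 3 * s2 / (2 * s2 - 1)"
    using assms(2) by simp
  then have s: "0 < s1" "0 < s2"
    using assms(2,3) by linarith+
  obtain C where C: "\<And>F. finite F \<Longrightarrow>
      (\<Sum>k\<in>F. (1 + \<bar>wdot \<omega> k\<bar>) powr (- (2 * s1 * \<theta> - 2)) * (1 + \<bar>wpdot \<omega> k\<bar>) powr (- (2 * s2 * (1 - \<theta>)))) \<le> C"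
    using bounded_sums_lattice_powr[OF assms(1) \<alpha> \<beta>] by blast
  define A where "A = 2 powr (2 * s1 * \<theta>) * 2 powr (2 * s2 * (1 - \<theta>))"
  show ?thesis
  proof
    fix F :: "(int \<times> int) set" assume F: "finite F"
    have "(\<Sum>k\<in>F. (wdot \<omega> k)\<^sup>2 / hweight \<omega> s1 s2 k)
          \<le> (\<Sum>k\<in>F. A * ((1 + \<bar>wdot \<omega> k\<bar>) powr (- (2 * s1 * \<theta> - 2))
                          * (1 + \<bar>wpdot \<omega> k\<bar>) powr (- (2 * s2 * (1 - \<theta>)))))"
      using sq_div_jbr_powr_add_le[OF s \<theta>] by (intro sum_mono) (simp add: hweight_def A_def)
    also have "\<dots> \<le> A * C"
      using C[OF F] by (simp add: A_def sum_distrib_left[symmetric])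
    finally show "(\<Sum>k\<in>F. (wdot \<omega> k)\<^sup>2 / hweight \<omega> s1 s2 k) \<le> A * C" .
  qed
qed

lemma sum_abs_mult_le_weighted_L2:
  fixes x y W :: "'a \<Rightarrow> real"
  assumes "\<And>k. k \<in> F \<Longrightarrow> 0 < W k"
  shows "(\<Sum>k\<in>F. \<bar>x k\<bar> * \<bar>y k\<bar>) \<le> sqrt (\<Sum>k\<in>F. (x k)\<^sup>2 / W k) * sqrt (\<Sum>k\<in>F. W k * (y k)\<^sup>2)"
proof -
  have "(\<Sum>k\<in>F. \<bar>x k\<bar> * \<bar>y k\<bar>) = (\<Sum>k\<in>F. \<bar>x k / sqrt (W k)\<bar> * \<bar>sqrt (W k) * y k\<bar>)"
  proof (rule sum.cong)
    fix k assume "k \<in> F"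
    then have "0 < sqrt (W k)" using assms by simp
    then show "\<bar>x k\<bar> * \<bar>y k\<bar> = \<bar>x k / sqrt (W k)\<bar> * \<bar>sqrt (W k) * y k\<bar>"
      by (simp add: abs_mult abs_divide)
  qed simp
  also have "\<dots> \<le> L2_set (\<lambda>k. x k / sqrt (W k)) F * L2_set (\<lambda>k. sqrt (W k) * y k) F"
    by (rule L2_set_mult_ineq)
  also have "L2_set (\<lambda>k. x k / sqrt (W k)) F = sqrt (\<Sum>k\<in>F. (x k)\<^sup>2 / W k)"
    unfolding L2_set_def using assms
    by (intro arg_cong[where f = sqrt] sum.cong) (auto simp: power_divide less_imp_le)
  also have "L2_set (\<lambda>k. sqrt (W k) * y k) F = sqrt (\<Sum>k\<in>F. W k * (y k)\<^sup>2)"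
    unfolding L2_set_def using assms
    by (intro arg_cong[where f = sqrt] sum.cong) (auto simp: power_mult_distrib less_imp_le)
  finally show ?thesis .
qed

lemma dx_l1_embedding:
  assumes "\<omega> \<noteq> 0" "1/2 < s2" "3 * s2 / (2 * s2 - 1) < s1"
  obtains C where "0 \<le> C"
    "\<And>F v. finite F \<Longrightarrow> (\<Sum>k\<in>F. \<bar>wdot \<omega> k\<bar> * cmod (v k))
                         \<le> C * sqrt (\<Sum>k\<in>F. hweight \<omega> s1 s2 k * (cmod (v k))\<^sup>2)"
proof -
  obtain D where D: "\<And>F. finite F \<Longrightarrow> (\<Sum>k\<in>F. (wdot \<omega> k)\<^sup>2 / hweight \<omega> s1 s2 k) \<le> D"
    using bounded_sums_wdot_sq_div_hweight[OF assms] by blast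
  show ?thesis
  proof
    show "0 \<le> sqrt (max D 0)" by simp
    fix F :: "(int \<times> int) set" and v :: "int \<times> int \<Rightarrow> complex" assume F: "finite F"
    have "(\<Sum>k\<in>F. \<bar>wdot \<omega> k\<bar> * cmod (v k))
          \<le> sqrt (\<Sum>k\<in>F. (wdot \<omega> k)\<^sup>2 / hweight \<omega> s1 s2 k) * sqrt (\<Sum>k\<in>F. hweight \<omega> s1 s2 k * (cmod (v k))\<^sup>2)"
      using sum_abs_mult_le_weighted_L2[of F "hweight \<omega> s1 s2" "wdot \<omega>" "\<lambda>k. cmod (v k)"] hweight_pos
      by simp
    also have "\<dots> \<le> sqrt (max D 0) * sqrt (\<Sum>k\<in>F. hweight \<omega> s1 s2 k * (cmod (v k))\<^sup>2)"
      using D[OF F] by (intro mult_right_mono)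
        (auto intro!: sum_nonneg mult_nonneg_nonneg hweight_nonneg)
    finally show "(\<Sum>k\<in>F. \<bar>wdot \<omega> k\<bar> * cmod (v k))
                  \<le> sqrt (max D 0) * sqrt (\<Sum>k\<in>F. hweight \<omega> s1 s2 k * (cmod (v k))\<^sup>2)" .
  qed
qed

section \<open>Differential inequalities\<close>

lemma has_real_derivative_nonneg_imp_le:
  fixes g g' :: "real \<Rightarrow> real"
  assumes T: "0 \<le> T"
    and g: "\<And>t. t \<in> {0..T} \<Longrightarrow> (g has_real_derivative g' t) (at t within {0..})"
    and g': "\<And>t. t \<in> {0..T} \<Longrightarrow> 0 \<le> g' t"
  shows "g 0 \<le> g T"
proof (rule DERIV_nonneg_imp_increasing_open[OF T])
  fix t assume t: "0 < t" "t < T"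
  then have "at t within {0..} = at t"
    by (intro at_within_interior) simp
  then show "\<exists>y. DERIV g t :> y \<and> 0 \<le> y"
    using g[of t] g'[of t] t by auto
next
  show "continuous_on {0..T} g"
    unfolding continuous_on_eq_continuous_within
  proof
    fix t assume "t \<in> {0..T}"
    then have "continuous (at t within {0..}) g"
      by (rule DERIV_continuous[OF g])
    then show "continuous (at t within {0..T}) g"
      by (rule continuous_within_subset) auto
  qed
qed

lemma gronwall_zero:
  fixes f f' :: "real \<Rightarrow> real"
  assumes T: "0 \<le> T"
    and f: "\<And>t. t \<in> {0..T} \<Longrightarrow> (f has_real_derivative f' t) (at t within {0..})"
    and f': "\<And>t. t \<in> {0..T} \<Longrightarrow> f' t \<le> L * f t"
    and nonneg: "\<And>t. t \<in> {0..T} \<Longrightarrow> 0 \<le> f t"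
    and f0: "f 0 = 0"
  shows "f T = 0"
proof -
  have "- exp (- L * 0) * f 0 \<le> - exp (- L * T) * f T"
  proof (rule has_real_derivative_nonneg_imp_le[OF T])
    fix t assume t: "t \<in> {0..T}"
    show "((\<lambda>s. - exp (- L * s) * f s) has_real_derivative exp (- L * t) * (L * f t - f' t)) (at t within {0..})"
      by (rule derivative_eq_intros refl f[OF t] | simp add: algebra_simps)+
    show "0 \<le> exp (- L * t) * (L * f t - f' t)"
      using f'[OF t] by simp
  qed
  then show ?thesis
    using nonneg[of T] T f0 by (simp add: mult_le_0_iff)
qed

text \<open>Comparison with the blow-up solution \<open>(c - C t / 2)\<^sup>-\<^sup>2\<close> of \<open>Q' = C Q\<^sup>3\<^sup>/\<^sup>2\<close>; the shift \<open>\<epsilon>\<close>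
  keeps \<open>1 / sqrt (Q + \<epsilon>)\<close> differentiable where \<open>Q\<close> vanishes.\<close>
lemma inv_sqrt_lower_bound:
  fixes Q Q' :: "real \<Rightarrow> real"
  assumes T: "0 \<le> T" and \<epsilon>: "0 < \<epsilon>" and C: "0 < C"
    and Q: "\<And>t. t \<in> {0..T} \<Longrightarrow> (Q has_real_derivative Q' t) (at t within {0..})"
    and Q': "\<And>t. t \<in> {0..T} \<Longrightarrow> Q' t \<le> C * Q t * sqrt (Q t)"
    and nonneg: "\<And>t. t \<in> {0..T} \<Longrightarrow> 0 \<le> Q t"
  shows "1 / sqrt (Q 0 + \<epsilon>) - C * T / 2 \<le> 1 / sqrt (Q T + \<epsilon>)"
proof -
  have "1 / sqrt (Q 0 + \<epsilon>) + C * 0 / 2 \<le> 1 / sqrt (Q T + \<epsilon>) + C * T / 2"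
  proof (rule has_real_derivative_nonneg_imp_le[OF T])
    fix t assume t: "t \<in> {0..T}"
    define R where "R = Q t + \<epsilon>"
    have R: "0 < R" using nonneg[OF t] \<epsilon> by (simp add: R_def)
    have "((\<lambda>s. Q s + \<epsilon>) has_real_derivative Q' t) (at t within {0..})"
      using DERIV_add[OF Q[OF t] DERIV_const[of \<epsilon>]] by simp
    from DERIV_chain2[OF DERIV_real_sqrt[OF R[unfolded R_def]] this]
    have "((\<lambda>s. sqrt (Q s + \<epsilon>)) has_real_derivative inverse (sqrt R) / 2 * Q' t) (at t within {0..})"
      by (simp add: R_def)
    from DERIV_divide[OF DERIV_const[of 1] this] R
    have inv: "((\<lambda>s. 1 / sqrt (Q s + \<epsilon>)) has_real_derivative - (inverse (sqrt R) / 2 * Q' t) / (sqrt R * sqrt R))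
            (at t within {0..})"
      by (simp add: R_def)
    have lin: "((\<lambda>s. C * s / 2) has_real_derivative C / 2) (at t within {0..})"
      using DERIV_cmult[OF DERIV_ident, of "C / 2"] by (simp add: mult_ac)
    have "- (inverse (sqrt R) / 2 * Q' t) / (sqrt R * sqrt R) + C / 2 = C / 2 - Q' t / (2 * sqrt R * R)"
      using R by (simp add: field_simps)
    with DERIV_add[OF inv lin]
    show "((\<lambda>s. 1 / sqrt (Q s + \<epsilon>) + C * s / 2) has_real_derivative
            C / 2 - Q' t / (2 * sqrt R * R)) (at t within {0..})"
      by simp
    have "C * Q t * sqrt (Q t) \<le> C * R * sqrt R"
      using C nonneg[OF t] \<epsilon> by (intro mult_mono mult_left_mono) (auto simp: R_def)
    with Q'[OF t] R have "Q' t / (2 * sqrt R * R) \<le> C / 2"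
      by (simp add: pos_divide_le_eq mult_ac)
    then show "0 \<le> C / 2 - Q' t / (2 * sqrt R * R)"
      by simp
  qed
  then show ?thesis by simp
qed

lemma shifted_energy_bound:
  fixes Q Q' :: "real \<Rightarrow> real"
  assumes T: "0 \<le> T" and C: "0 < C" and \<epsilon>: "0 < \<epsilon>" "\<epsilon> \<le> 1"
    and Q: "\<And>t. t \<in> {0..T} \<Longrightarrow> (Q has_real_derivative Q' t) (at t within {0..})"
    and Q': "\<And>t. t \<in> {0..T} \<Longrightarrow> Q' t \<le> C * Q t * sqrt (Q t)"
    and nonneg: "\<And>t. t \<in> {0..T} \<Longrightarrow> 0 \<le> Q t"
    and B: "Q 0 \<le> B" and N: "sqrt B \<le> N" and T_le: "T \<le> 1 / (8 * C * (N + 1))"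
  shows "Q T + \<epsilon> \<le> 256 / 225 * (B + \<epsilon>)"
proof -
  define a where "a = sqrt (B + \<epsilon>)"
  have "0 \<le> B" using nonneg[of 0] T B by simp
  then have "a \<le> sqrt B + sqrt \<epsilon>"
    unfolding a_def using \<epsilon> by (intro sqrt_add_le_add_sqrt) auto
  moreover have "sqrt \<epsilon> \<le> 1"
    using \<epsilon> by simp
  ultimately have a: "0 < a" "a \<le> N + 1"
    using \<open>0 \<le> B\<close> \<epsilon> N by (simp add: a_def, linarith)
  have "1 / a \<le> 1 / sqrt (Q 0 + \<epsilon>)"
    using B nonneg[of 0] T \<epsilon> by (intro frac_le) (auto simp: a_def)
  moreover have "C * T / 2 \<le> 1 / (16 * a)"
  proof -
    have "C * T \<le> C * (1 / (8 * C * (N + 1)))"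
      using T_le C by (intro mult_left_mono) auto
    also have "\<dots> \<le> 1 / (8 * a)"
      using a C by (simp add: frac_le)
    finally show ?thesis by simp
  qed
  moreover have "1 / a - 1 / (16 * a) = 15 / (16 * a)"
    by simp
  ultimately have "15 / (16 * a) \<le> 1 / sqrt (Q T + \<epsilon>)"
    using inv_sqrt_lower_bound[OF T \<epsilon>(1) C Q Q' nonneg] by linarith
  moreover have "0 < sqrt (Q T + \<epsilon>)"
    using nonneg[of T] T \<epsilon> by simp
  ultimately have "15 / (16 * a) * sqrt (Q T + \<epsilon>) \<le> 1"
    by (simp add: le_divide_eq)
  then have "sqrt (Q T + \<epsilon>) \<le> 16 * a / 15"
    using a by (simp add: field_simps)
  then have "Q T + \<epsilon> \<le> (16 * a / 15)\<^sup>2"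
    by (rule sqrt_le_D)
  also have "\<dots> = 256 / 225 * (B + \<epsilon>)"
    using \<open>0 \<le> B\<close> \<epsilon> by (simp add: a_def power_divide power_mult_distrib)
  finally show ?thesis .
qed

lemma energy_doubling:
  fixes Q Q' :: "real \<Rightarrow> real"
  assumes T: "0 \<le> T" and C: "0 < C"
    and Q: "\<And>t. t \<in> {0..T} \<Longrightarrow> (Q has_real_derivative Q' t) (at t within {0..})"
    and Q': "\<And>t. t \<in> {0..T} \<Longrightarrow> Q' t \<le> C * Q t * sqrt (Q t)"
    and nonneg: "\<And>t. t \<in> {0..T} \<Longrightarrow> 0 \<le> Q t"
    and B: "Q 0 \<le> B" and N: "sqrt B \<le> N" and T_le: "T \<le> 1 / (8 * C * (N + 1))"
  shows "Q T \<le> 2 * B"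
proof (rule field_le_epsilon)
  fix e :: real assume "0 < e"
  then have \<epsilon>: "0 < min 1 e" "min 1 e \<le> 1" "min 1 e \<le> e"
    by simp_all
  from shifted_energy_bound[OF T C \<epsilon>(1,2) Q Q' nonneg B N T_le]
  have "Q T + min 1 e \<le> 256 / 225 * B + 256 / 225 * min 1 e"
    by (simp only: distrib_left)
  moreover have "0 \<le> B" using nonneg[of 0] T B by simp
  ultimately show "Q T \<le> 2 * B + e"
    using \<epsilon> by linarith
qed

lemma Pn_apply: "Pn \<omega> n f k = (if k \<in> mode_box \<omega> (real n) then f k else 0)"
  by (simp add: Pn_def Pqr_def fmult_def Pqr_sym_def mode_box_def)

lemma Pqr_apply: "Pqr \<omega> q r f k = (if \<bar>wdot \<omega> k\<bar> \<le> q \<and> \<bar>wpdot \<omega> k\<bar> \<le> r then f k else 0)"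
  by (simp add: Pqr_def fmult_def Pqr_sym_def)

lemma conv_eq_sum:
  assumes "finite S" and "\<And>j. j \<notin> S \<Longrightarrow> f j = 0"
  shows "conv f g k = (\<Sum>j\<in>S. f j * g (k - j))"
proof -
  have "conv f g k = (\<Sum>\<^sub>\<infinity>j. f j * g (k - j))"
    by (simp add: conv_def minus_prod_def)
  also have "\<dots> = (\<Sum>\<^sub>\<infinity>j\<in>S. f j * g (k - j))"
    by (rule infsum_cong_neutral) (auto simp: assms(2))
  finally show ?thesis
    using assms(1) by simp
qed

definition disp_sym :: "real \<times> real \<Rightarrow> int \<times> int \<Rightarrow> complex" where
  "disp_sym \<omega> k = - (hilbert_sym \<omega> k * (dx_sym \<omega> k * dx_sym \<omega> k))"

lemma Re_disp_sym: "Re (disp_sym \<omega> k) = 0"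
  by (simp add: disp_sym_def hilbert_sym_def dx_sym_def)

lemma Re_cnj_mult_disp_sym_add: "Re (cnj z * (disp_sym \<omega> k * z + w)) = Re (cnj z * w)"
proof -
  have "cnj z * (disp_sym \<omega> k * z + w) = disp_sym \<omega> k * of_real ((cmod z)\<^sup>2) + cnj z * w"
    by (simp add: complex_norm_square algebra_simps del: of_real_power)
  then show ?thesis
    by (simp add: Re_disp_sym)
qed

lemma cnj_disp_sym_uminus: "cnj (disp_sym \<omega> (- k)) = disp_sym \<omega> k"
  by (auto simp: disp_sym_def hilbert_sym_def dx_sym_def wdot_uminus)

lemma cnj_dx_sym_uminus: "cnj (dx_sym \<omega> (- k)) = dx_sym \<omega> k"
  by (simp add: dx_sym_def wdot_uminus)

lemma dx_sym_eq: "dx_sym \<omega> k = of_real (2 * pi * wdot \<omega> k) * \<i>"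
  by (simp add: dx_sym_def)

lemma reg_rhs_in_box:
  assumes "\<omega> \<noteq> 0" and k: "k \<in> mode_box \<omega> (real n)"
  shows "reg_rhs \<omega> n f k = disp_sym \<omega> k * f k
           + dx_sym \<omega> k * (\<Sum>j\<in>mode_box \<omega> (real n). Pn \<omega> n f j * Pn \<omega> n f (k - j))"
  using k conv_eq_sum[OF finite_mode_box[OF assms(1)], of "real n" "Pn \<omega> n f" "Pn \<omega> n f" k]
  by (simp add: reg_rhs_def Pn_apply Hilb_def Dx_def fmult_def disp_sym_def algebra_simps)

lemma reg_rhs_outside_box: "k \<notin> mode_box \<omega> (real n) \<Longrightarrow> reg_rhs \<omega> n f k = 0"
  by (simp add: reg_rhs_def Pn_apply)

definition reflect_cnj :: "coeffs \<Rightarrow> coeffs" where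
  "reflect_cnj v = (\<lambda>k. cnj (v (- k)))"

lemma realvalued_iff: "realvalued v \<longleftrightarrow> (\<forall>k. v (- k) = cnj (v k))"
  by (simp add: realvalued_def uminus_prod_def)

lemma realvalued_Pqr: "realvalued u \<Longrightarrow> realvalued (Pqr \<omega> q r u)"
  by (simp add: realvalued_iff Pqr_apply wdot_uminus wpdot_uminus)

lemma realvalued_Pn: "realvalued u \<Longrightarrow> realvalued (Pn \<omega> n u)"
  by (simp add: Pn_def realvalued_Pqr)

lemma has_real_derivative_cmod_sq:
  fixes f :: "real \<Rightarrow> complex"
  assumes "(f has_vector_derivative f') (at t within s)"
  shows "((\<lambda>t. (cmod (f t))\<^sup>2) has_real_derivative 2 * Re (cnj (f t) * f')) (at t within s)"
proof -
  have "((\<lambda>t. Re (f t)) has_real_derivative Re f') (at t within s)"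
       "((\<lambda>t. Im (f t)) has_real_derivative Im f') (at t within s)"
    using assms by (rule has_field_derivative_Re, rule has_field_derivative_Im)
  from DERIV_add[OF DERIV_power[OF this(1), of 2] DERIV_power[OF this(2), of 2]]
  show ?thesis
    by (simp add: cmod_power2 algebra_simps)
qed

lemma reg_solution_initial: "is_reg_solution \<omega> n v0 u \<Longrightarrow> u 0 = v0"
  by (simp add: is_reg_solution_def)

lemma reg_solution_has_derivative:
  assumes "is_reg_solution \<omega> n v0 u" "0 \<le> t"
  shows "((\<lambda>\<tau>. u \<tau> k) has_vector_derivative reg_rhs \<omega> n (u t) k) (at t within {0..})"
  using assms unfolding is_reg_solution_def by blast

lemma reg_solution_continuous_on:
  assumes "is_reg_solution \<omega> n v0 u"
  shows "continuous_on {0..T} (\<lambda>t. u t k)"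
proof (rule continuous_on_vector_derivative)
  fix t assume "t \<in> {0..T}"
  then show "((\<lambda>t. u t k) has_vector_derivative reg_rhs \<omega> n (u t) k) (at t within {0..T})"
    by (intro has_vector_derivative_within_subset[OF reg_solution_has_derivative[OF assms]]) auto
qed

lemma reg_solution_bounded:
  assumes "is_reg_solution \<omega> n v0 u" and "finite S"
  obtains M where "0 \<le> M" "\<And>k t. k \<in> S \<Longrightarrow> t \<in> {0..T} \<Longrightarrow> cmod (u t k) \<le> M"
proof -
  have "bounded (\<Union>k\<in>S. (\<lambda>t. u t k) ` {0..T})"
    using assms(2) compact_continuous_image[OF reg_solution_continuous_on[OF assms(1)]]
    by (intro bounded_UN compact_imp_bounded) auto
  then obtain M where "\<And>z. z \<in> (\<Union>k\<in>S. (\<lambda>t. u t k) ` {0..T}) \<Longrightarrow> norm z \<le> M"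
    unfolding bounded_iff by blast
  then show ?thesis
    by (intro that[of "max M 0"]) force+
qed

lemma reg_solution_outside_box:
  assumes sol: "is_reg_solution \<omega> n v0 u" and k: "k \<notin> mode_box \<omega> (real n)" and t: "0 \<le> t"
  shows "u t k = v0 k"
proof -
  have "((\<lambda>\<tau>. u \<tau> k) has_vector_derivative 0) (at s within {0..})" if "s \<in> {0..}" for s
    using reg_solution_has_derivative[OF sol, of s k] that reg_rhs_outside_box[OF k] by simp
  then obtain c where "\<And>s. s \<in> {0::real..} \<Longrightarrow> u s k = c"
    by (rule has_vector_derivative_zero_constant[OF convex_real_interval(1)]) auto
  then show ?thesis
    using t reg_solution_initial[OF sol] by force
qed

lemma sum_reflect:
  assumes "\<And>k. k \<in> S \<Longrightarrow> - k \<in> S"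
  shows "(\<Sum>j\<in>S. g j) = (\<Sum>j\<in>S. g (- j :: int \<times> int))"
  by (rule sum.reindex_bij_witness[where i = uminus and j = uminus]) (auto simp: assms)

lemma conv_sub_cnj_conv_reflect:
  fixes V :: coeffs
  assumes sym: "\<And>k. k \<in> S \<Longrightarrow> - k \<in> S"
  defines "D \<equiv> V - reflect_cnj V"
  shows "(\<Sum>j\<in>S. V j * V (k - j)) - cnj (\<Sum>j\<in>S. V j * V (- k - j))
         = (\<Sum>j\<in>S. V j * D (k - j) + D j * reflect_cnj V (k - j))"
proof -
  have "cnj (\<Sum>j\<in>S. V j * V (- k - j)) = (\<Sum>j\<in>S. cnj (V j) * cnj (V (- k - j)))"
    by (simp add: cnj_sum)
  also have "\<dots> = (\<Sum>j\<in>S. cnj (V (- j)) * cnj (V (- k - - j)))"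
    by (rule sum_reflect[OF sym])
  also have "\<dots> = (\<Sum>j\<in>S. reflect_cnj V j * reflect_cnj V (k - j))"
    by (simp add: reflect_cnj_def algebra_simps)
  finally show ?thesis
    by (simp add: D_def sum_subtractf[symmetric] algebra_simps)
qed

lemma reg_rhs_sub_reflect_cnj:
  fixes U :: coeffs
  assumes "\<omega> \<noteq> 0" and k: "k \<in> mode_box \<omega> (real n)"
  defines "V \<equiv> Pn \<omega> n U"
  shows "reg_rhs \<omega> n U k - cnj (reg_rhs \<omega> n U (- k))
         = disp_sym \<omega> k * (V - reflect_cnj V) k
           + dx_sym \<omega> k * (\<Sum>j\<in>mode_box \<omega> (real n).
                V j * (V - reflect_cnj V) (k - j) + (V - reflect_cnj V) j * reflect_cnj V (k - j))"
proof -
  have "- k \<in> mode_box \<omega> (real n)"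
    using k by (rule uminus_mem_mode_box)
  with k have defect: "(V - reflect_cnj V) k = U k - cnj (U (- k))"
    by (simp add: V_def Pn_apply reflect_cnj_def)
  have "reg_rhs \<omega> n U k = disp_sym \<omega> k * U k
                   + dx_sym \<omega> k * (\<Sum>j\<in>mode_box \<omega> (real n). V j * V (k - j))"
    using reg_rhs_in_box[OF assms(1) k] by (simp add: V_def)
  moreover have "cnj (reg_rhs \<omega> n U (- k)) = disp_sym \<omega> k * cnj (U (- k))
                   + dx_sym \<omega> k * cnj (\<Sum>j\<in>mode_box \<omega> (real n). V j * V (- k - j))"
    using reg_rhs_in_box[OF assms(1) \<open>- k \<in> _\<close>] by (simp add: V_def cnj_disp_sym_uminus cnj_dx_sym_uminus)
  ultimately show ?thesis
    unfolding defect using conv_sub_cnj_conv_reflect[OF uminus_mem_mode_box, of \<omega> "real n" V k]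
    by (simp add: algebra_simps)
qed

lemma cmod_mult_sum_defect_le:
  fixes V W D :: coeffs
  assumes M: "0 \<le> M" "\<And>j. cmod (V j) \<le> M" "\<And>j. cmod (W j) \<le> M"
    and D: "\<And>a b. cmod (D a) * cmod (D b) \<le> f"
  shows "cmod (D k) * cmod (\<Sum>j\<in>S. V j * D (k - j) + D j * W (k - j)) \<le> 2 * M * card S * f"
proof -
  have "cmod (\<Sum>j\<in>S. V j * D (k - j) + D j * W (k - j)) \<le> (\<Sum>j\<in>S. M * cmod (D (k - j)) + cmod (D j) * M)"
  proof (intro order_trans[OF norm_sum] sum_mono)
    fix j
    have "cmod (V j) * cmod (D (k - j)) \<le> M * cmod (D (k - j))"
      "cmod (D j) * cmod (W (k - j)) \<le> cmod (D j) * M"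
      using M(2)[of j] M(3)[of "k - j"] by (simp_all add: mult_right_mono mult_left_mono)
    then show "cmod (V j * D (k - j) + D j * W (k - j)) \<le> M * cmod (D (k - j)) + cmod (D j) * M"
      using norm_triangle_ineq[of "V j * D (k - j)" "D j * W (k - j)"] by (simp add: norm_mult)
  qed
  then have "cmod (D k) * cmod (\<Sum>j\<in>S. V j * D (k - j) + D j * W (k - j))
             \<le> cmod (D k) * (\<Sum>j\<in>S. M * cmod (D (k - j)) + cmod (D j) * M)"
    by (intro mult_left_mono) auto
  also have "\<dots> = M * (\<Sum>j\<in>S. cmod (D k) * cmod (D (k - j)) + cmod (D k) * cmod (D j))"
    by (simp add: sum_distrib_left algebra_simps)
  also have "\<dots> \<le> M * (\<Sum>j\<in>S. f + f)"
    using M(1) by (intro mult_left_mono sum_mono add_mono D) auto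
  finally show ?thesis
    by simp
qed

lemma Re_reality_defect_le:
  fixes U :: coeffs
  assumes \<omega>: "\<omega> \<noteq> 0" and M: "0 \<le> M" "\<And>j. j \<in> mode_box \<omega> (real n) \<Longrightarrow> cmod (U j) \<le> M"
  defines "S \<equiv> mode_box \<omega> (real n)"
  shows "(\<Sum>k\<in>S. 2 * Re (cnj (U k - cnj (U (- k))) * (reg_rhs \<omega> n U k - cnj (reg_rhs \<omega> n U (- k)))))
         \<le> 4 * M * card S * (\<Sum>k\<in>S. cmod (dx_sym \<omega> k)) * (\<Sum>k\<in>S. (cmod (U k - cnj (U (- k))))\<^sup>2)"
proof -
  define V where "V = Pn \<omega> n U"
  define D where "D = V - reflect_cnj V"
  define f where "f = (\<Sum>k\<in>S. (cmod (U k - cnj (U (- k))))\<^sup>2)"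
  have fin: "finite S" using finite_mode_box[OF \<omega>] by (simp add: S_def)
  have sym: "- k \<in> S \<longleftrightarrow> k \<in> S" for k
    using uminus_mem_mode_box[of "- k" \<omega>] uminus_mem_mode_box[of k \<omega>] by (auto simp: S_def)
  have D_in: "D k = U k - cnj (U (- k))" if "k \<in> S" for k
    using that sym[of k] by (simp add: D_def V_def Pn_apply reflect_cnj_def S_def)
  have D_out: "D k = 0" if "k \<notin> S" for k
    using that sym[of k] by (simp add: D_def V_def Pn_apply reflect_cnj_def S_def)
  have D_sq: "(cmod (D k))\<^sup>2 \<le> f" for k
    using member_le_sum[OF _ _ fin, of k "\<lambda>k. (cmod (U k - cnj (U (- k))))\<^sup>2"]
    by (cases "k \<in> S") (auto simp: D_in D_out f_def sum_nonneg)
  have D_mult: "cmod (D a) * cmod (D b) \<le> f" for a b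
    using sum_squares_bound[of "cmod (D a)" "cmod (D b)"] D_sq[of a] D_sq[of b] by linarith
  have V_le: "cmod (V j) \<le> M" "cmod (reflect_cnj V j) \<le> M" for j
    using M by (simp_all add: V_def Pn_apply reflect_cnj_def S_def)
  have pointwise: "2 * Re (cnj (U k - cnj (U (- k))) * (reg_rhs \<omega> n U k - cnj (reg_rhs \<omega> n U (- k))))
                   \<le> 4 * M * card S * cmod (dx_sym \<omega> k) * f" if k: "k \<in> S" for k
  proof -
    define X where "X = (\<Sum>j\<in>S. V j * D (k - j) + D j * reflect_cnj V (k - j))"
    have "reg_rhs \<omega> n U k - cnj (reg_rhs \<omega> n U (- k)) = disp_sym \<omega> k * D k + dx_sym \<omega> k * X"
      unfolding X_def D_def V_def S_def using reg_rhs_sub_reflect_cnj[OF \<omega> k[unfolded S_def]] .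
    then have "2 * Re (cnj (U k - cnj (U (- k))) * (reg_rhs \<omega> n U k - cnj (reg_rhs \<omega> n U (- k))))
               = 2 * Re (cnj (D k) * (disp_sym \<omega> k * D k + dx_sym \<omega> k * X))"
      by (simp only: D_in[OF k, symmetric])
    also have "\<dots> = 2 * Re (cnj (D k) * (dx_sym \<omega> k * X))"
      by (simp only: Re_cnj_mult_disp_sym_add)
    also have "\<dots> \<le> 2 * (cmod (dx_sym \<omega> k) * (cmod (D k) * cmod X))"
    proof -
      have "Re (cnj (D k) * (dx_sym \<omega> k * X)) \<le> cmod (cnj (D k) * (dx_sym \<omega> k * X))"
        by (rule complex_Re_le_cmod)
      also have "\<dots> = cmod (dx_sym \<omega> k) * (cmod (D k) * cmod X)"
        by (simp add: norm_mult mult_ac)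
      finally show ?thesis by simp
    qed
    also have "\<dots> \<le> 2 * (cmod (dx_sym \<omega> k) * (2 * M * card S * f))"
      unfolding X_def
      using cmod_mult_sum_defect_le[where V = V and W = "reflect_cnj V" and D = D and S = S and k = k,
                                    OF M(1) V_le(1) V_le(2) D_mult]
      by (intro mult_left_mono) auto
    finally show ?thesis
      by (simp add: mult_ac)
  qed
  have "(\<Sum>k\<in>S. 2 * Re (cnj (U k - cnj (U (- k))) * (reg_rhs \<omega> n U k - cnj (reg_rhs \<omega> n U (- k)))))
        \<le> (\<Sum>k\<in>S. 4 * M * card S * cmod (dx_sym \<omega> k) * f)"
    by (rule sum_mono) (rule pointwise)
  then show ?thesis
    by (simp add: f_def sum_distrib_left sum_distrib_right mult_ac)
qed

lemma reg_solution_realvalued: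
  assumes \<omega>: "\<omega> \<noteq> 0" and sol: "is_reg_solution \<omega> n v0 u" and v0: "realvalued v0" and T: "0 \<le> T"
  shows "realvalued (u T)"
proof -
  let ?S = "mode_box \<omega> (real n)"
  have v0': "v0 (- k) = cnj (v0 k)" for k
    using v0 unfolding realvalued_iff by (rule spec)
  have fin: "finite ?S" by (rule finite_mode_box[OF \<omega>])
  obtain M where M: "0 \<le> M" "\<And>k t. k \<in> ?S \<Longrightarrow> t \<in> {0..T} \<Longrightarrow> cmod (u t k) \<le> M"
    using reg_solution_bounded[OF sol fin, where T = T] by blast
  define f where "f t = (\<Sum>k\<in>?S. (cmod (u t k - cnj (u t (- k))))\<^sup>2)" for t
  have "f T = 0"
  proof (rule gronwall_zero[OF T])
    fix t assume t: "t \<in> {0..T}"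
    show "(f has_real_derivative (\<Sum>k\<in>?S. 2 * Re (cnj (u t k - cnj (u t (- k)))
                                     * (reg_rhs \<omega> n (u t) k - cnj (reg_rhs \<omega> n (u t) (- k))))))
            (at t within {0..})"
      unfolding f_def using t
      by (intro DERIV_sum has_real_derivative_cmod_sq has_vector_derivative_diff
                has_vector_derivative_cnj reg_solution_has_derivative[OF sol]) auto
    show "(\<Sum>k\<in>?S. 2 * Re (cnj (u t k - cnj (u t (- k))) * (reg_rhs \<omega> n (u t) k - cnj (reg_rhs \<omega> n (u t) (- k)))))
          \<le> 4 * M * card ?S * (\<Sum>k\<in>?S. cmod (dx_sym \<omega> k)) * f t"
      unfolding f_def using M(2)[OF _ t] by (rule Re_reality_defect_le[OF \<omega> M(1)])
    show "0 \<le> f t"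
      by (simp add: f_def sum_nonneg)
  next
    show "f 0 = 0"
      by (simp add: f_def reg_solution_initial[OF sol] v0')
  qed
  then have "\<forall>k\<in>?S. (cmod (u T k - cnj (u T (- k))))\<^sup>2 = 0"
    using fin by (simp add: f_def sum_nonneg_eq_0_iff)
  then have "u T (- k) = cnj (u T k)" if "k \<in> ?S" for k
    using bspec[OF \<open>\<forall>k\<in>?S. _\<close> uminus_mem_mode_box[OF that]] by simp
  moreover have "u T (- k) = cnj (u T k)" if "k \<notin> ?S" for k
  proof -
    have "- k \<notin> ?S"
      using that uminus_mem_mode_box[of "- k" \<omega> "real n"] by (metis minus_minus)
    then show ?thesis
      using that T by (simp add: reg_solution_outside_box[OF sol] v0')
  qed
  ultimately show ?thesis
    unfolding realvalued_iff by blast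
qed

section \<open>The energy estimate\<close>

lemma weighted_energy_flux_eq:
  fixes U :: coeffs and w :: "int \<times> int \<Rightarrow> real" and n :: nat
  assumes \<omega>: "\<omega> \<noteq> 0"
  defines "S \<equiv> mode_box \<omega> (real n)" and "V \<equiv> Pn \<omega> n U"
  shows "(\<Sum>k\<in>S. w k * (2 * Re (cnj (U k) * reg_rhs \<omega> n U k)))
         = - 4 * pi * Im (\<Sum>(a, b)\<in>sum_pairs S. of_real (w (a + b) * wdot \<omega> (a + b))
                                                  * cnj (V (a + b)) * V a * V b)"
proof -
  have fin: "finite S" using finite_mode_box[OF \<omega>] by (simp add: S_def)
  have V_out: "V k = 0" if "k \<notin> S" for k
    using that by (simp add: V_def S_def Pn_apply)
  have "w k * (2 * Re (cnj (U k) * reg_rhs \<omega> n U k))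
        = - 4 * pi * Im (of_real (w k * wdot \<omega> k) * cnj (V k) * (\<Sum>j\<in>S. V j * V (k - j)))"
    if k: "k \<in> S" for k
  proof -
    define z where "z = of_real (wdot \<omega> k) * cnj (V k) * (\<Sum>j\<in>S. V j * V (k - j))"
    have "cnj (U k) * reg_rhs \<omega> n U k = disp_sym \<omega> k * of_real ((cmod (V k))\<^sup>2) + of_real (2 * pi) * \<i> * z"
      using reg_rhs_in_box[OF \<omega> k[unfolded S_def], of U] k
      by (simp add: z_def V_def S_def Pn_apply dx_sym_eq complex_norm_square algebra_simps del: of_real_power)
    then have Re_eq: "Re (cnj (U k) * reg_rhs \<omega> n U k) = - 2 * pi * Im z"
      by (simp add: Re_disp_sym)
    have eq: "of_real (w k * wdot \<omega> k) * cnj (V k) * (\<Sum>j\<in>S. V j * V (k - j)) = of_real (w k) * z"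
      by (simp add: z_def)
    show ?thesis
      unfolding Re_eq eq by (simp add: algebra_simps)
  qed
  then have "(\<Sum>k\<in>S. w k * (2 * Re (cnj (U k) * reg_rhs \<omega> n U k)))
             = - 4 * pi * Im (\<Sum>k\<in>S. of_real (w k * wdot \<omega> k) * cnj (V k) * (\<Sum>j\<in>S. V j * V (k - j)))"
    by (simp add: Im_sum sum_distrib_left)
  also have "(\<Sum>k\<in>S. of_real (w k * wdot \<omega> k) * cnj (V k) * (\<Sum>j\<in>S. V j * V (k - j)))
             = (\<Sum>(a, b)\<in>sum_pairs S. of_real (w (a + b) * wdot \<omega> (a + b)) * cnj (V (a + b)) * V a * V b)"
    by (rule sum_convolution_eq_sum_pairs[OF fin V_out])
  finally show ?thesis .
qed

lemma Im_flux_wdot_weight_le: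
  fixes V :: coeffs
  assumes fin: "finite S" and sym: "\<And>k. k \<in> S \<Longrightarrow> - k \<in> S" and real: "\<And>k. V (- k) = cnj (V k)"
    and s1: "1 \<le> s1"
  shows "\<bar>Im (\<Sum>(a, b)\<in>sum_pairs S. of_real ((jbr (wdot \<omega> (a + b)) powr s1)\<^sup>2 * wdot \<omega> (a + b))
                                       * cnj (V (a + b)) * V a * V b)\<bar>
         \<le> (4 * (s1 * 2 powr (s1 - 1)) + 1) * (\<Sum>a\<in>S. \<bar>wdot \<omega> a\<bar> * cmod (V a))
             * (\<Sum>c\<in>S. (jbr (wdot \<omega> c) powr s1)\<^sup>2 * (cmod (V c))\<^sup>2)"
proof (rule Im_sum_pairs_weighted_le[where lam = "\<lambda>k. jbr (wdot \<omega> k) powr s1" and xi = "wdot \<omega>"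
                                     and v = V, OF fin sym real])
  show "0 \<le> s1 * 2 powr (s1 - 1)"
    using s1 by simp
  show "\<bar>jbr (wdot \<omega> (a + b)) powr s1 - jbr (wdot \<omega> b) powr s1\<bar> * \<bar>wdot \<omega> b\<bar>
        \<le> s1 * 2 powr (s1 - 1) * (jbr (wdot \<omega> a) powr s1 * \<bar>wdot \<omega> b\<bar> + \<bar>wdot \<omega> a\<bar> * jbr (wdot \<omega> b) powr s1)" for a b
    using jbr_powr_commutator_le[OF s1, of "wdot \<omega> a" "wdot \<omega> b"] by (simp add: wdot_add)
qed (simp_all add: wdot_add)

lemma Im_flux_wpdot_weight_le:
  fixes V :: coeffs
  assumes fin: "finite S" and sym: "\<And>k. k \<in> S \<Longrightarrow> - k \<in> S" and real: "\<And>k. V (- k) = cnj (V k)"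
    and s2: "0 < s2" "s2 \<le> 1"
  shows "\<bar>Im (\<Sum>(a, b)\<in>sum_pairs S. of_real ((jbr (wpdot \<omega> (a + b)) powr s2)\<^sup>2 * wdot \<omega> (a + b))
                                       * cnj (V (a + b)) * V a * V b)\<bar>
         \<le> (4 * 1 + 1) * (\<Sum>a\<in>S. \<bar>wdot \<omega> a\<bar> * cmod (V a))
             * (\<Sum>c\<in>S. (jbr (wpdot \<omega> c) powr s2)\<^sup>2 * (cmod (V c))\<^sup>2)"
proof (rule Im_sum_pairs_weighted_le[where lam = "\<lambda>k. jbr (wpdot \<omega> k) powr s2" and xi = "wdot \<omega>"
                                     and v = V, OF fin sym real])
  fix a b
  have "\<bar>jbr (wpdot \<omega> (a + b)) powr s2 - jbr (wpdot \<omega> b) powr s2\<bar> \<le> jbr (wpdot \<omega> a) powr s2"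
    using jbr_powr_diff_le[OF s2, of "wpdot \<omega> a" "wpdot \<omega> b"] by (simp add: wpdot_add)
  then show "\<bar>jbr (wpdot \<omega> (a + b)) powr s2 - jbr (wpdot \<omega> b) powr s2\<bar> * \<bar>wdot \<omega> b\<bar>
             \<le> 1 * (jbr (wpdot \<omega> a) powr s2 * \<bar>wdot \<omega> b\<bar> + \<bar>wdot \<omega> a\<bar> * jbr (wpdot \<omega> b) powr s2)"
    by (simp add: mult_right_mono add_increasing2)
qed (simp_all add: wdot_add)

lemma Im_energy_flux_le:
  fixes V :: coeffs
  assumes fin: "finite S" and sym: "\<And>k. k \<in> S \<Longrightarrow> - k \<in> S" and real: "realvalued V"
    and s1: "1 \<le> s1" and s2: "0 < s2" "s2 \<le> 1"
  shows "\<bar>Im (\<Sum>(a, b)\<in>sum_pairs S. of_real (hweight \<omega> s1 s2 (a + b) * wdot \<omega> (a + b))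
                                       * cnj (V (a + b)) * V a * V b)\<bar>
         \<le> (4 * (s1 * 2 powr (s1 - 1) + 1) + 1) * (\<Sum>a\<in>S. \<bar>wdot \<omega> a\<bar> * cmod (V a))
             * (\<Sum>c\<in>S. hweight \<omega> s1 s2 c * (cmod (V c))\<^sup>2)"
proof -
  define lx where "lx k = jbr (wdot \<omega> k) powr s1" for k
  define ly where "ly k = jbr (wpdot \<omega> k) powr s2" for k
  define G where "G = (\<Sum>a\<in>S. \<bar>wdot \<omega> a\<bar> * cmod (V a))"
  define K where "K = 4 * (s1 * 2 powr (s1 - 1) + 1) + 1"
  define flux where "flux lam = Im (\<Sum>(a, b)\<in>sum_pairs S. of_real ((lam (a + b))\<^sup>2 * wdot \<omega> (a + b))
                                                       * cnj (V (a + b)) * V a * V b)"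
    for lam :: "int \<times> int \<Rightarrow> real"
  have hw: "hweight \<omega> s1 s2 k = (lx k)\<^sup>2 + (ly k)\<^sup>2" for k
    using jbr_pos by (simp add: hweight_def lx_def ly_def power2_eq_square powr_add[symmetric])
  have Vr: "V (- k) = cnj (V k)" for k
    using real unfolding realvalued_iff by (rule spec)
  have "0 \<le> G" by (simp add: G_def sum_nonneg)
  have "\<bar>flux lx\<bar> \<le> (4 * (s1 * 2 powr (s1 - 1)) + 1) * G * (\<Sum>c\<in>S. (lx c)\<^sup>2 * (cmod (V c))\<^sup>2)"
    unfolding flux_def lx_def G_def by (rule Im_flux_wdot_weight_le[where V = V, OF fin sym Vr s1])
  also have "\<dots> \<le> K * G * (\<Sum>c\<in>S. (lx c)\<^sup>2 * (cmod (V c))\<^sup>2)"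
    using \<open>0 \<le> G\<close> by (intro mult_right_mono sum_nonneg) (auto simp: K_def)
  finally have "\<bar>flux lx\<bar> \<le> K * G * (\<Sum>c\<in>S. (lx c)\<^sup>2 * (cmod (V c))\<^sup>2)" .
  moreover have "\<bar>flux ly\<bar> \<le> (4 * 1 + 1) * G * (\<Sum>c\<in>S. (ly c)\<^sup>2 * (cmod (V c))\<^sup>2)"
    unfolding flux_def ly_def G_def by (rule Im_flux_wpdot_weight_le[where V = V, OF fin sym Vr s2])
  moreover have "\<dots> \<le> K * G * (\<Sum>c\<in>S. (ly c)\<^sup>2 * (cmod (V c))\<^sup>2)"
    using \<open>0 \<le> G\<close> s1 by (intro mult_right_mono sum_nonneg) (auto simp: K_def)
  moreover have "Im (\<Sum>(a, b)\<in>sum_pairs S. of_real (hweight \<omega> s1 s2 (a + b) * wdot \<omega> (a + b))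
                                          * cnj (V (a + b)) * V a * V b) = flux lx + flux ly"
    unfolding flux_def by (simp add: hw sum.distrib[symmetric] split_def algebra_simps)
  ultimately show ?thesis
    by (simp add: hw G_def K_def algebra_simps sum.distrib)
qed

lemma energy_derivative_le:
  fixes U :: coeffs and n :: nat
  assumes \<omega>: "\<omega> \<noteq> 0" and s1: "1 \<le> s1" and s2: "0 < s2" "s2 \<le> 1" and real: "realvalued U"
    and C0: "0 \<le> C0"
    and embed: "\<And>F v. finite F \<Longrightarrow> (\<Sum>k\<in>F. \<bar>wdot \<omega> k\<bar> * cmod (v k))
                                    \<le> C0 * sqrt (\<Sum>k\<in>F. hweight \<omega> s1 s2 k * (cmod (v k))\<^sup>2)"
  defines "S \<equiv> mode_box \<omega> (real n)"
  defines "Q \<equiv> (\<Sum>k\<in>S. hweight \<omega> s1 s2 k * (cmod (U k))\<^sup>2)"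
  shows "(\<Sum>k\<in>S. hweight \<omega> s1 s2 k * (2 * Re (cnj (U k) * reg_rhs \<omega> n U k)))
         \<le> 4 * pi * (4 * (s1 * 2 powr (s1 - 1) + 1) + 1) * C0 * Q * sqrt Q"
proof -
  define V where "V = Pn \<omega> n U"
  define G where "G = (\<Sum>a\<in>S. \<bar>wdot \<omega> a\<bar> * cmod (V a))"
  define flux where "flux = Im (\<Sum>(a, b)\<in>sum_pairs S. of_real (hweight \<omega> s1 s2 (a + b) * wdot \<omega> (a + b))
                                                     * cnj (V (a + b)) * V a * V b)"
  define K where "K = 4 * (s1 * 2 powr (s1 - 1) + 1) + 1"
  have fin: "finite S" using finite_mode_box[OF \<omega>] by (simp add: S_def)
  have Q: "Q = (\<Sum>k\<in>S. hweight \<omega> s1 s2 k * (cmod (V k))\<^sup>2)"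
    by (simp add: Q_def V_def S_def Pn_apply)
  have "0 \<le> Q"
    unfolding Q_def by (intro sum_nonneg mult_nonneg_nonneg hweight_nonneg) auto
  have "G \<le> C0 * sqrt Q"
    unfolding G_def Q by (rule embed[OF fin])
  have "\<bar>flux\<bar> \<le> K * G * Q"
  proof -
    have "realvalued V" by (simp add: V_def realvalued_Pn real)
    moreover have "\<And>k. k \<in> S \<Longrightarrow> - k \<in> S" by (simp add: S_def uminus_mem_mode_box)
    ultimately show ?thesis
      unfolding flux_def K_def G_def Q using Im_energy_flux_le[OF fin _ _ s1 s2] by blast
  qed
  have "(\<Sum>k\<in>S. hweight \<omega> s1 s2 k * (2 * Re (cnj (U k) * reg_rhs \<omega> n U k))) = - 4 * pi * flux"
    unfolding flux_def V_def S_def by (rule weighted_energy_flux_eq[OF \<omega>])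
  also have "\<dots> \<le> 4 * pi * (K * G * Q)"
  proof -
    have "- flux \<le> K * G * Q"
      using \<open>\<bar>flux\<bar> \<le> K * G * Q\<close> by linarith
    from mult_left_mono[OF this, of "4 * pi"] show ?thesis
      by simp
  qed
  also have "\<dots> \<le> 4 * pi * (K * (C0 * sqrt Q) * Q)"
    using \<open>G \<le> C0 * sqrt Q\<close> \<open>0 \<le> Q\<close> s1 by (intro mult_left_mono mult_right_mono) (auto simp: K_def)
  finally show ?thesis
    by (simp add: K_def mult_ac)
qed

definition Henergy :: "real \<times> real \<Rightarrow> real \<Rightarrow> real \<Rightarrow> coeffs \<Rightarrow> real" where
  "Henergy \<omega> s1 s2 u = (\<Sum>\<^sub>\<infinity>k. hweight \<omega> s1 s2 k * (cmod (u k))\<^sup>2)"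

lemma summable_hweight_of_Hspace:
  "u \<in> Hspace \<omega> s1 s2 \<Longrightarrow> (\<lambda>k. hweight \<omega> s1 s2 k * (cmod (u k))\<^sup>2) summable_on UNIV"
  unfolding Hspace_def hweight_def distrib_right by (auto intro: summable_on_add)

lemma Henergy_eq_add:
  "u \<in> Hspace \<omega> s1 s2 \<Longrightarrow> Henergy \<omega> s1 s2 u
     = (\<Sum>\<^sub>\<infinity>k. jbr (wdot \<omega> k) powr (2 * s1) * (cmod (u k))\<^sup>2)
       + (\<Sum>\<^sub>\<infinity>k. jbr (wpdot \<omega> k) powr (2 * s2) * (cmod (u k))\<^sup>2)"
  unfolding Henergy_def hweight_def distrib_right Hspace_def by (auto intro: infsum_add)

lemma sqrt_Henergy_le_Hnorm: "u \<in> Hspace \<omega> s1 s2 \<Longrightarrow> sqrt (Henergy \<omega> s1 s2 u) \<le> Hnorm \<omega> s1 s2 u"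
  unfolding Hnorm_def by (simp add: Henergy_eq_add sqrt_add_le_add_sqrt infsum_nonneg)

lemma Hnorm_le_sqrt_Henergy: "u \<in> Hspace \<omega> s1 s2 \<Longrightarrow> Hnorm \<omega> s1 s2 u \<le> sqrt (2 * Henergy \<omega> s1 s2 u)"
proof -
  have "sqrt a + sqrt b \<le> sqrt (2 * (a + b))" if "0 \<le> a" "0 \<le> b" for a b :: real
  proof (rule real_le_rsqrt)
    show "(sqrt a + sqrt b)\<^sup>2 \<le> 2 * (a + b)"
      using that sum_squares_bound[of "sqrt a" "sqrt b"] by (simp add: power2_sum)
  qed
  then show "u \<in> Hspace \<omega> s1 s2 \<Longrightarrow> ?thesis"
    unfolding Hnorm_def by (simp add: Henergy_eq_add infsum_nonneg)
qed

lemma Hnorm_nonneg: "0 \<le> Hnorm \<omega> s1 s2 u"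
  unfolding Hnorm_def by (intro add_nonneg_nonneg real_sqrt_ge_zero infsum_nonneg) auto

lemma weighted_sq_dominated_le:
  fixes c :: real
  assumes "0 \<le> c" and "cmod a \<le> cmod b"
  shows "c * (cmod a)\<^sup>2 \<le> c * (cmod b)\<^sup>2"
  using assms by (intro mult_left_mono power_mono) auto

lemma Hspace_dominated:
  assumes u: "u \<in> Hspace \<omega> s1 s2" and le: "\<And>k. cmod (v k) \<le> cmod (u k)"
  shows "v \<in> Hspace \<omega> s1 s2"
proof -
  have "(\<lambda>k. c k * (cmod (v k))\<^sup>2) summable_on UNIV"
    if "(\<lambda>k. c k * (cmod (u k))\<^sup>2) summable_on UNIV" "\<And>k. 0 \<le> c k" for c :: "int \<times> int \<Rightarrow> real"
    using that le by (intro summable_on_comparison_test[OF that(1)] weighted_sq_dominated_le) auto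
  then show ?thesis
    using u by (simp add: Hspace_def)
qed

lemma Henergy_dominated_le:
  assumes u: "u \<in> Hspace \<omega> s1 s2" and le: "\<And>k. cmod (v k) \<le> cmod (u k)"
  shows "Henergy \<omega> s1 s2 v \<le> Henergy \<omega> s1 s2 u"
  unfolding Henergy_def
  using summable_hweight_of_Hspace[OF Hspace_dominated[OF u le]] summable_hweight_of_Hspace[OF u]
  by (rule infsum_mono) (rule weighted_sq_dominated_le[OF hweight_nonneg le])

lemma Hspace_eq_outside_finite:
  assumes "u \<in> Hspace \<omega> s1 s2" and "finite F" and "\<And>k. k \<notin> F \<Longrightarrow> v k = u k"
  shows "v \<in> Hspace \<omega> s1 s2"
proof -
  have "(\<lambda>k. c k * (cmod (v k))\<^sup>2) summable_on UNIV"
    if "(\<lambda>k. c k * (cmod (u k))\<^sup>2) summable_on UNIV" for c :: "int \<times> int \<Rightarrow> real"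
  proof -
    have "(\<lambda>k. c k * (cmod (u k))\<^sup>2) summable_on - F"
      using that by (rule summable_on_subset) auto
    then have "(\<lambda>k. c k * (cmod (v k))\<^sup>2) summable_on - F"
      by (rule summable_on_cong[THEN iffD1, rotated]) (simp add: assms(3))
    moreover have "(\<lambda>k. c k * (cmod (v k))\<^sup>2) summable_on F"
      using assms(2) by simp
    ultimately show ?thesis
      using summable_on_Un_disjoint[of _ F "- F"] by (simp add: Un_commute)
  qed
  then show ?thesis
    using assms(1) by (simp add: Hspace_def)
qed

lemma Henergy_split:
  assumes "u \<in> Hspace \<omega> s1 s2" and "finite F"
  shows "Henergy \<omega> s1 s2 u = (\<Sum>k\<in>F. hweight \<omega> s1 s2 k * (cmod (u k))\<^sup>2)
                             + (\<Sum>\<^sub>\<infinity>k\<in>- F. hweight \<omega> s1 s2 k * (cmod (u k))\<^sup>2)"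
proof -
  let ?f = "\<lambda>k. hweight \<omega> s1 s2 k * (cmod (u k))\<^sup>2"
  have "?f summable_on - F"
    using summable_hweight_of_Hspace[OF assms(1)] by (rule summable_on_subset) auto
  moreover have "?f summable_on F"
    using assms(2) by simp
  ultimately have "infsum ?f (F \<union> - F) = infsum ?f F + infsum ?f (- F)"
    by (intro infsum_Un_disjoint) auto
  then show ?thesis
    using assms(2) by (simp add: Henergy_def)
qed

lemma weighted_sq_summable_diff:
  fixes c :: "'a \<Rightarrow> real" and a b :: "'a \<Rightarrow> complex"
  assumes c: "\<And>k. 0 \<le> c k"
    and a: "(\<lambda>k. c k * (cmod (a k))\<^sup>2) summable_on UNIV"
    and b: "(\<lambda>k. c k * (cmod (b k))\<^sup>2) summable_on UNIV"
  shows "(\<lambda>k. c k * (cmod (a k - b k))\<^sup>2) summable_on UNIV"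
proof (rule summable_on_comparison_test)
  show "(\<lambda>k. 2 * (c k * (cmod (a k))\<^sup>2) + 2 * (c k * (cmod (b k))\<^sup>2)) summable_on UNIV"
    by (intro summable_on_add summable_on_cmult_right a b)
  fix k
  have "(cmod (a k - b k))\<^sup>2 \<le> (cmod (a k) + cmod (b k))\<^sup>2"
    using norm_triangle_ineq4[of "a k" "b k"] by (intro power_mono) auto
  also have "\<dots> \<le> 2 * (cmod (a k))\<^sup>2 + 2 * (cmod (b k))\<^sup>2"
    using sum_squares_bound[of "cmod (a k)" "cmod (b k)"] by (simp add: power2_sum)
  finally have "(cmod (a k - b k))\<^sup>2 \<le> 2 * (cmod (a k))\<^sup>2 + 2 * (cmod (b k))\<^sup>2" .
  from mult_left_mono[OF this c[of k]]
  show "c k * (cmod (a k - b k))\<^sup>2 \<le> 2 * (c k * (cmod (a k))\<^sup>2) + 2 * (c k * (cmod (b k))\<^sup>2)"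
    by (simp add: algebra_simps)
  show "0 \<le> c k * (cmod (a k - b k))\<^sup>2"
    using c[of k] by simp
qed

lemma weighted_sq_infsum_triangle:
  fixes c :: "'a \<Rightarrow> real" and a b :: "'a \<Rightarrow> complex"
  assumes c: "\<And>k. 0 \<le> c k"
    and a: "(\<lambda>k. c k * (cmod (a k))\<^sup>2) summable_on UNIV"
    and b: "(\<lambda>k. c k * (cmod (b k))\<^sup>2) summable_on UNIV"
  shows "sqrt (\<Sum>\<^sub>\<infinity>k. c k * (cmod (a k))\<^sup>2)
         \<le> sqrt (\<Sum>\<^sub>\<infinity>k. c k * (cmod (a k - b k))\<^sup>2) + sqrt (\<Sum>\<^sub>\<infinity>k. c k * (cmod (b k))\<^sup>2)"
proof -
  define A where "A = sqrt (\<Sum>\<^sub>\<infinity>k. c k * (cmod (a k - b k))\<^sup>2)"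
  define B where "B = sqrt (\<Sum>\<^sub>\<infinity>k. c k * (cmod (b k))\<^sup>2)"
  have ab: "(\<lambda>k. c k * (cmod (a k - b k))\<^sup>2) summable_on UNIV"
    by (rule weighted_sq_summable_diff[OF c a b])
  have L2: "L2_set (\<lambda>k. sqrt (c k) * cmod (g k)) F = sqrt (\<Sum>k\<in>F. c k * (cmod (g k))\<^sup>2)" for g F
    unfolding L2_set_def using c by (simp add: power_mult_distrib)
  have partial: "sqrt (\<Sum>k\<in>F. c k * (cmod (g k))\<^sup>2) \<le> sqrt (\<Sum>\<^sub>\<infinity>k. c k * (cmod (g k))\<^sup>2)"
    if "finite F" "(\<lambda>k. c k * (cmod (g k))\<^sup>2) summable_on UNIV" for g F
    using finite_sum_le_infsum[OF that(2,1)] c by simp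
  have "(\<Sum>\<^sub>\<infinity>k. c k * (cmod (a k))\<^sup>2) \<le> (A + B)\<^sup>2"
  proof (rule infsum_le_finite_sums[OF a])
    fix F :: "'a set" assume F: "finite F"
    have "L2_set (\<lambda>k. sqrt (c k) * cmod (a k)) F
          \<le> L2_set (\<lambda>k. sqrt (c k) * cmod (a k - b k) + sqrt (c k) * cmod (b k)) F"
    proof (rule L2_set_mono)
      fix k
      have "cmod (a k) \<le> cmod (a k - b k) + cmod (b k)"
        using norm_triangle_ineq[of "a k - b k" "b k"] by simp
      then show "sqrt (c k) * cmod (a k) \<le> sqrt (c k) * cmod (a k - b k) + sqrt (c k) * cmod (b k)"
        using c[of k] by (simp add: mult_left_mono flip: distrib_left)
      show "0 \<le> sqrt (c k) * cmod (a k)"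
        using c[of k] by simp
    qed
    also have "\<dots> \<le> L2_set (\<lambda>k. sqrt (c k) * cmod (a k - b k)) F + L2_set (\<lambda>k. sqrt (c k) * cmod (b k)) F"
      by (rule L2_set_triangle_ineq)
    also have "\<dots> \<le> A + B"
      unfolding L2 A_def B_def using partial[OF F ab] partial[OF F b] by (rule add_mono)
    finally have "sqrt (\<Sum>k\<in>F. c k * (cmod (a k))\<^sup>2) \<le> A + B"
      by (simp add: L2)
    then show "(\<Sum>k\<in>F. c k * (cmod (a k))\<^sup>2) \<le> (A + B)\<^sup>2"
      by (rule sqrt_le_D)
  qed
  moreover have "0 \<le> A" "0 \<le> B"
    unfolding A_def B_def using c by (auto intro!: infsum_nonneg)
  ultimately show ?thesis
    unfolding A_def[symmetric] B_def[symmetric] by (intro real_le_lsqrt) auto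
qed

lemma Hnorm_triangle:
  assumes "a \<in> Hspace \<omega> s1 s2" "b \<in> Hspace \<omega> s1 s2"
  shows "Hnorm \<omega> s1 s2 a \<le> Hnorm \<omega> s1 s2 (a - b) + Hnorm \<omega> s1 s2 b"
  using weighted_sq_infsum_triangle[of "\<lambda>k. jbr (wdot \<omega> k) powr (2 * s1)" a b]
    weighted_sq_infsum_triangle[of "\<lambda>k. jbr (wpdot \<omega> k) powr (2 * s2)" a b] assms
  by (simp add: Hnorm_def Hspace_def)

lemma Hcompact_bounded:
  assumes K: "Hcompact \<omega> s1 s2 K"
  obtains B where "\<And>a. a \<in> K \<Longrightarrow> Hnorm \<omega> s1 s2 a \<le> B"
proof (rule ccontr)
  assume "\<not> thesis"
  with that have "\<forall>i::nat. \<exists>a\<in>K. real i < Hnorm \<omega> s1 s2 a"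
    by (meson not_le)
  then obtain x where x: "\<And>i. x i \<in> K" "\<And>i. real i < Hnorm \<omega> s1 s2 (x i)"
    by metis
  obtain r l where r: "strict_mono r" and l: "l \<in> K"
    and lim: "(\<lambda>i. Hnorm \<omega> s1 s2 (x (r i) - l)) \<longlonglongrightarrow> 0"
    using K x(1) unfolding Hcompact_def by blast
  obtain N where N: "\<And>i. N \<le> i \<Longrightarrow> Hnorm \<omega> s1 s2 (x (r i) - l) < 1"
    using order_tendstoD(2)[OF lim, of 1] by (auto simp: eventually_sequentially)
  define i where "i = max N (nat \<lceil>Hnorm \<omega> s1 s2 l\<rceil> + 1)"
  have "K \<subseteq> Hspace \<omega> s1 s2"
    using K by (simp add: Hcompact_def)
  then have "Hnorm \<omega> s1 s2 (x (r i)) \<le> Hnorm \<omega> s1 s2 (x (r i) - l) + Hnorm \<omega> s1 s2 l"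
    using x(1) l by (intro Hnorm_triangle) auto
  also have "\<dots> < 1 + Hnorm \<omega> s1 s2 l"
    using N[of i] by (simp add: i_def)
  also have "\<dots> \<le> real i"
    unfolding i_def by linarith
  also have "\<dots> \<le> real (r i)"
    using seq_suble[OF r, of i] by simp
  finally show False
    using x(2)[of "r i"] by linarith
qed

lemma reg_solution_mem_Hspace:
  assumes "\<omega> \<noteq> 0" and sol: "is_reg_solution \<omega> n v0 u" and "v0 \<in> Hspace \<omega> s1 s2" and "0 \<le> t"
  shows "u t \<in> Hspace \<omega> s1 s2"
  using reg_solution_outside_box[OF sol _ \<open>0 \<le> t\<close>]
  by (rule Hspace_eq_outside_finite[OF \<open>v0 \<in> _\<close> finite_mode_box[OF \<open>\<omega> \<noteq> 0\<close>, of "real n"]])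

lemma reg_solution_Henergy_split:
  assumes \<omega>: "\<omega> \<noteq> 0" and sol: "is_reg_solution \<omega> n v0 u" and v0: "v0 \<in> Hspace \<omega> s1 s2" and "0 \<le> t"
  shows "Henergy \<omega> s1 s2 (u t) = (\<Sum>k\<in>mode_box \<omega> (real n). hweight \<omega> s1 s2 k * (cmod (u t k))\<^sup>2)
           + (\<Sum>\<^sub>\<infinity>k\<in>- mode_box \<omega> (real n). hweight \<omega> s1 s2 k * (cmod (v0 k))\<^sup>2)"
proof -
  have "(\<Sum>\<^sub>\<infinity>k\<in>- mode_box \<omega> (real n). hweight \<omega> s1 s2 k * (cmod (u t k))\<^sup>2)
        = (\<Sum>\<^sub>\<infinity>k\<in>- mode_box \<omega> (real n). hweight \<omega> s1 s2 k * (cmod (v0 k))\<^sup>2)"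
    using reg_solution_outside_box[OF sol _ \<open>0 \<le> t\<close>] by (intro infsum_cong) simp
  then show ?thesis
    using Henergy_split[OF reg_solution_mem_Hspace[OF assms] finite_mode_box[OF \<omega>, of "real n"]] by simp
qed

lemma reg_solution_box_energy_has_derivative:
  assumes "is_reg_solution \<omega> n v0 u" and "0 \<le> t"
  shows "((\<lambda>\<tau>. \<Sum>k\<in>mode_box \<omega> (real n). hweight \<omega> s1 s2 k * (cmod (u \<tau> k))\<^sup>2) has_real_derivative
           (\<Sum>k\<in>mode_box \<omega> (real n). hweight \<omega> s1 s2 k * (2 * Re (cnj (u t k) * reg_rhs \<omega> n (u t) k))))
         (at t within {0..})"
  using assms
  by (intro DERIV_sum DERIV_cmult has_real_derivative_cmod_sq reg_solution_has_derivative)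

lemma reg_solution_Henergy_le:
  fixes u :: "real \<Rightarrow> coeffs" and n :: nat and s1 C0 :: real
  defines "C \<equiv> 4 * pi * (4 * (s1 * 2 powr (s1 - 1) + 1) + 1) * C0 + 1"
  assumes \<omega>: "\<omega> \<noteq> 0" and s1: "1 \<le> s1" and s2: "0 < s2" "s2 \<le> 1" and C0: "0 \<le> C0"
    and embed: "\<And>F v. finite F \<Longrightarrow> (\<Sum>k\<in>F. \<bar>wdot \<omega> k\<bar> * cmod (v k))
                                    \<le> C0 * sqrt (\<Sum>k\<in>F. hweight \<omega> s1 s2 k * (cmod (v k))\<^sup>2)"
    and u0: "u0 \<in> Hspace \<omega> s1 s2" "realvalued u0"
    and sol: "is_reg_solution \<omega> n (Pqr \<omega> q r u0) u"
    and t: "0 \<le> t" "t \<le> 1 / (8 * C * (Hnorm \<omega> s1 s2 u0 + 1))"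
  shows "Henergy \<omega> s1 s2 (u t) \<le> 2 * Henergy \<omega> s1 s2 u0"
proof -
  let ?S = "mode_box \<omega> (real n)"
  define v0 where "v0 = Pqr \<omega> q r u0"
  have v0_le: "cmod (v0 k) \<le> cmod (u0 k)" for k
    by (simp add: v0_def Pqr_apply)
  have v0: "v0 \<in> Hspace \<omega> s1 s2"
    using u0(1) v0_le by (rule Hspace_dominated)
  note sol = sol[folded v0_def]
  define R where "R = (\<Sum>\<^sub>\<infinity>k\<in>- ?S. hweight \<omega> s1 s2 k * (cmod (v0 k))\<^sup>2)"
  define QS where "QS \<tau> = (\<Sum>k\<in>?S. hweight \<omega> s1 s2 k * (cmod (u \<tau> k))\<^sup>2)" for \<tau>
  define QS' where "QS' \<tau> = (\<Sum>k\<in>?S. hweight \<omega> s1 s2 k * (2 * Re (cnj (u \<tau> k) * reg_rhs \<omega> n (u \<tau>) k)))" for \<tau>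
  have "0 \<le> R" "\<And>\<tau>. 0 \<le> QS \<tau>"
    unfolding R_def QS_def by (auto intro!: infsum_nonneg sum_nonneg mult_nonneg_nonneg hweight_nonneg)
  have Henergy_u: "Henergy \<omega> s1 s2 (u \<tau>) = QS \<tau> + R" if "0 \<le> \<tau>" for \<tau>
    unfolding QS_def R_def using \<omega> sol v0 that by (rule reg_solution_Henergy_split)
  have "QS t + R \<le> 2 * Henergy \<omega> s1 s2 u0"
  proof (rule energy_doubling[where Q = "\<lambda>\<tau>. QS \<tau> + R" and Q' = QS' and C = C and N = "Hnorm \<omega> s1 s2 u0"])
    show "QS 0 + R \<le> Henergy \<omega> s1 s2 u0"
      using Henergy_u[of 0] reg_solution_initial[OF sol] Henergy_dominated_le[OF u0(1) v0_le] by simp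
    show "0 < C"
      unfolding C_def using C0 s1 by (intro add_nonneg_pos mult_nonneg_nonneg) auto
    show "sqrt (Henergy \<omega> s1 s2 u0) \<le> Hnorm \<omega> s1 s2 u0"
      using u0(1) by (rule sqrt_Henergy_le_Hnorm)
    fix \<tau> assume \<tau>: "\<tau> \<in> {0..t}"
    from DERIV_add[OF reg_solution_box_energy_has_derivative[OF sol] DERIV_const[of R]] \<tau>
    show "((\<lambda>\<tau>. QS \<tau> + R) has_real_derivative QS' \<tau>) (at \<tau> within {0..})"
      by (simp add: QS_def QS'_def)
    have "realvalued (u \<tau>)"
      using \<tau> realvalued_Pqr[OF u0(2)] by (intro reg_solution_realvalued[OF \<omega> sol]) (auto simp: v0_def)
    then have "QS' \<tau> \<le> (C - 1) * QS \<tau> * sqrt (QS \<tau>)"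
      unfolding QS'_def QS_def C_def using energy_derivative_le[OF \<omega> s1 s2 _ C0 embed, of "u \<tau>" n]
      by simp
    also have "\<dots> \<le> C * (QS \<tau> + R) * sqrt (QS \<tau> + R)"
      using \<open>0 \<le> R\<close> \<open>0 \<le> QS \<tau>\<close> C0 s1 unfolding C_def
      by (intro mult_mono real_sqrt_le_mono) auto
    finally show "QS' \<tau> \<le> C * (QS \<tau> + R) * sqrt (QS \<tau> + R)" .
    show "0 \<le> QS \<tau> + R"
      using \<open>0 \<le> R\<close> \<open>0 \<le> QS \<tau>\<close> by simp
  qed (use t in auto)
  then show ?thesis
    using Henergy_u[OF t(1)] by simp
qed

lemma reg_solution_Hnorm_le:
  fixes u :: "real \<Rightarrow> coeffs" and n :: nat and s1 C0 :: real
  defines "C \<equiv> 4 * pi * (4 * (s1 * 2 powr (s1 - 1) + 1) + 1) * C0 + 1"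
  assumes \<omega>: "\<omega> \<noteq> 0" and s1: "1 \<le> s1" and s2: "0 < s2" "s2 \<le> 1" and C0: "0 \<le> C0"
    and embed: "\<And>F v. finite F \<Longrightarrow> (\<Sum>k\<in>F. \<bar>wdot \<omega> k\<bar> * cmod (v k))
                                    \<le> C0 * sqrt (\<Sum>k\<in>F. hweight \<omega> s1 s2 k * (cmod (v k))\<^sup>2)"
    and u0: "u0 \<in> Hspace \<omega> s1 s2" "realvalued u0"
    and sol: "is_reg_solution \<omega> n (Pqr \<omega> q r u0) u"
    and t: "0 \<le> t" "t \<le> 1 / (8 * C * (Hnorm \<omega> s1 s2 u0 + 1))"
  shows "Hnorm \<omega> s1 s2 (u t) \<le> 2 * Hnorm \<omega> s1 s2 u0"
proof -
  have "Pqr \<omega> q r u0 \<in> Hspace \<omega> s1 s2"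
    using u0(1) by (rule Hspace_dominated) (simp add: Pqr_apply)
  then have "Hnorm \<omega> s1 s2 (u t) \<le> sqrt (2 * Henergy \<omega> s1 s2 (u t))"
    by (intro Hnorm_le_sqrt_Henergy reg_solution_mem_Hspace[OF \<omega> sol _ t(1)])
  also have "\<dots> \<le> sqrt (2 * (2 * Henergy \<omega> s1 s2 u0))"
    using reg_solution_Henergy_le[OF \<omega> s1 s2 C0 embed u0 sol t[unfolded C_def]] by simp
  also have "\<dots> = 2 * sqrt (Henergy \<omega> s1 s2 u0)"
    by (simp add: real_sqrt_mult)
  also have "\<dots> \<le> 2 * Hnorm \<omega> s1 s2 u0"
    using sqrt_Henergy_le_Hnorm[OF u0(1)] by simp
  finally show ?thesis .
qed

lemma reg_family_Hnorm_le:
  assumes \<omega>: "\<omega> \<noteq> 0" and s2: "1/2 < s2" "s2 \<le> 1" and s1: "3 * s2 / (2 * s2 - 1) < s1"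
  obtains Tf :: "real \<Rightarrow> real" where "\<And>r. 0 < Tf r" "\<And>r r'. \<bar>r'\<bar> \<le> \<bar>r\<bar> \<Longrightarrow> Tf r \<le> Tf r'"
    "\<And>u0 \<delta> u n t. u0 \<in> Hspace \<omega> s1 s2 \<Longrightarrow> realvalued u0 \<Longrightarrow> reg_family \<omega> s1 s2 \<delta> u0 u \<Longrightarrow> 1 \<le> n
       \<Longrightarrow> t \<in> {0..Tf (Hnorm \<omega> s1 s2 u0)} \<Longrightarrow> Hnorm \<omega> s1 s2 (u n t) \<le> 2 * Hnorm \<omega> s1 s2 u0"
proof -
  have "1 \<le> 3 * s2 / (2 * s2 - 1)"
    using s2 by (simp add: le_divide_eq)
  then have "1 \<le> s1" "0 < s2"
    using s1 s2 by linarith+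
  obtain C0 where C0: "0 \<le> C0" and embed: "\<And>F v. finite F \<Longrightarrow> (\<Sum>k\<in>F. \<bar>wdot \<omega> k\<bar> * cmod (v k))
                                    \<le> C0 * sqrt (\<Sum>k\<in>F. hweight \<omega> s1 s2 k * (cmod (v k))\<^sup>2)"
    using dx_l1_embedding[OF \<omega> s2(1) s1] by blast
  define C where "C = 4 * pi * (4 * (s1 * 2 powr (s1 - 1) + 1) + 1) * C0 + 1"
  have "0 < C"
    unfolding C_def using C0 \<open>1 \<le> s1\<close> by (intro add_nonneg_pos mult_nonneg_nonneg) auto
  show ?thesis
  proof
    show "0 < 1 / (8 * C * (\<bar>r\<bar> + 1))" for r
      using \<open>0 < C\<close> by (simp add: add_pos_nonneg)
    show "1 / (8 * C * (\<bar>r\<bar> + 1)) \<le> 1 / (8 * C * (\<bar>r'\<bar> + 1))" if "\<bar>r'\<bar> \<le> \<bar>r\<bar>" for r r'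
      using that \<open>0 < C\<close> by (intro divide_left_mono mult_left_mono mult_pos_pos) auto
  next
    fix u0 :: coeffs and \<delta> :: "nat \<Rightarrow> real" and u :: "nat \<Rightarrow> real \<Rightarrow> coeffs" and n :: nat and t :: real
    assume "u0 \<in> Hspace \<omega> s1 s2" "realvalued u0" "reg_family \<omega> s1 s2 \<delta> u0 u" "1 \<le> n"
      "t \<in> {0..1 / (8 * C * (\<bar>Hnorm \<omega> s1 s2 u0\<bar> + 1))}"
    then show "Hnorm \<omega> s1 s2 (u n t) \<le> 2 * Hnorm \<omega> s1 s2 u0"
      using C0 embed \<open>1 \<le> s1\<close> \<open>0 < s2\<close> s2(2) Hnorm_nonneg[of \<omega> s1 s2 u0]
      by (intro reg_solution_Hnorm_le[OF \<omega>]) (auto simp: reg_family_def C_def)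
  qed
qed

theorem proposition4p2:
  fixes \<omega> :: "real \<times> real" and s1 s2 :: real
  assumes "incommensurable \<omega>"
    and "1/2 < s2" and "s2 \<le> 1"
    and "s1 > 3 * s2 / (2 * s2 - 1)"
  shows "(\<exists>Tf :: real \<Rightarrow> real. (\<forall>r. 0 < Tf r) \<and>
           (\<forall>u0 \<delta> u. u0 \<in> Hspace \<omega> s1 s2 \<longrightarrow> realvalued u0 \<longrightarrow> admissible_delta \<delta> \<longrightarrow>
              reg_family \<omega> s1 s2 \<delta> u0 u \<longrightarrow>
              (\<forall>n\<ge>1. \<forall>t\<in>{0..Tf (Hnorm \<omega> s1 s2 u0)}.
                  Hnorm \<omega> s1 s2 (u n t) \<le> 2 * Hnorm \<omega> s1 s2 u0)))
       \<and> (\<forall>K. Hcompact \<omega> s1 s2 K \<longrightarrow>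
           (\<exists>T>0. \<forall>u0\<in>K. \<forall>\<delta> u. realvalued u0 \<longrightarrow> admissible_delta \<delta> \<longrightarrow>
              reg_family \<omega> s1 s2 \<delta> u0 u \<longrightarrow>
              (\<forall>n\<ge>1. \<forall>t\<in>{0..T}. Hnorm \<omega> s1 s2 (u n t) \<le> 2 * Hnorm \<omega> s1 s2 u0)))"
proof -
  obtain Tf where Tf_pos: "\<And>r. 0 < Tf r" and Tf_anti: "\<And>r r'. \<bar>r'\<bar> \<le> \<bar>r\<bar> \<Longrightarrow> Tf r \<le> Tf r'"
    and bound: "\<And>u0 \<delta> u n t. u0 \<in> Hspace \<omega> s1 s2 \<Longrightarrow> realvalued u0 \<Longrightarrow> reg_family \<omega> s1 s2 \<delta> u0 u
                  \<Longrightarrow> 1 \<le> n \<Longrightarrow> t \<in> {0..Tf (Hnorm \<omega> s1 s2 u0)} \<Longrightarrow> Hnorm \<omega> s1 s2 (u n t) \<le> 2 * Hnorm \<omega> s1 s2 u0"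
    using reg_family_Hnorm_le[OF incommensurable_nonzero[OF assms(1)] assms(2-4)] by blast
  show ?thesis
  proof (intro conjI exI[of _ Tf] allI impI ballI Tf_pos)
    fix K assume K: "Hcompact \<omega> s1 s2 K"
    obtain B where B: "\<And>a. a \<in> K \<Longrightarrow> Hnorm \<omega> s1 s2 a \<le> B"
      using Hcompact_bounded[OF K] by blast
    show "\<exists>T>0. \<forall>u0\<in>K. \<forall>\<delta> u. realvalued u0 \<longrightarrow> admissible_delta \<delta> \<longrightarrow> reg_family \<omega> s1 s2 \<delta> u0 u \<longrightarrow>
            (\<forall>n\<ge>1. \<forall>t\<in>{0..T}. Hnorm \<omega> s1 s2 (u n t) \<le> 2 * Hnorm \<omega> s1 s2 u0)"
    proof (intro exI[of _ "Tf B"] conjI ballI allI impI Tf_pos)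
      fix u0 :: coeffs and \<delta> :: "nat \<Rightarrow> real" and u :: "nat \<Rightarrow> real \<Rightarrow> coeffs" and n :: nat and t :: real
      assume "u0 \<in> K" "realvalued u0" "reg_family \<omega> s1 s2 \<delta> u0 u" "1 \<le> n" "t \<in> {0..Tf B}"
      moreover have "Tf B \<le> Tf (Hnorm \<omega> s1 s2 u0)"
        using B[OF \<open>u0 \<in> K\<close>] Hnorm_nonneg[of \<omega> s1 s2 u0] by (intro Tf_anti) auto
      ultimately show "Hnorm \<omega> s1 s2 (u n t) \<le> 2 * Hnorm \<omega> s1 s2 u0"
        using K by (intro bound) (auto simp: Hcompact_def)
    qed
  qed (rule bound)
qed

end
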